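(* Let $\mathfrak g=\mathfrak a\ltimes\mathfrak b$ be a countable-dimensional complex Lie algebra, where $\mathfrak a$ is a Lie subalgebra of $\mathfrak g$ and $\mathfrak b$ is an ideal of $\mathfrak g$ with $\mathfrak g=\mathfrak a\oplus\mathfrak b$ as vector spaces. Let $M$ be a simple $\mathfrak g$-module containing a simple $\mathfrak b$-submodule $H$ whose $\mathfrak b$-module structure extends to a $\mathfrak g$-module structure on $H$; denote this $\mathfrak g$-module by $H^{\mathfrak g}$. Then $M\cong H^{\mathfrak g}\otimes U^{\mathfrak g}$ as $\mathfrak g$-modules for some simple $\mathfrak a$-module $U$.
   Context: For an $\mathfrak a$-module $U$, $U^{\mathfrak g}$ denotes the $\mathfrak g$-module obtained from $U$ by letting $\mathfrak b$ act trivially (via $\mathfrak g/\mathfrak b\cong\mathfrak a$). The tensor product of $\mathfrak g$-modules carries the diagonal action $x(u\otimes w)=xu\otimes w+u\otimes xw$. *)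

theory Defs
  imports "HOL-Analysis.Analysis"
begin

text \<open>Complex vector spaces are modelled with the library locale vector_space,
  with an explicit scalar multiplication sc :: complex => 'v => 'v.\<close>

definition lie_algebra :: "(complex \<Rightarrow> 'g::ab_group_add \<Rightarrow> 'g) \<Rightarrow> ('g \<Rightarrow> 'g \<Rightarrow> 'g) \<Rightarrow> bool" where
  "lie_algebra sg br \<longleftrightarrow> vector_space sg \<and>
     (\<forall>x y z. br (x + y) z = br x z + br y z) \<and>
     (\<forall>x y z. br x (y + z) = br x y + br x z) \<and>
     (\<forall>c x y. br (sg c x) y = sg c (br x y)) \<and>
     (\<forall>c x y. br x (sg c y) = sg c (br x y)) \<and>
     (\<forall>x. br x x = 0) \<and>
     (\<forall>x y z. br x (br y z) + br y (br z x) + br z (br x y) = 0)"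

definition countable_dim :: "(complex \<Rightarrow> 'v::ab_group_add \<Rightarrow> 'v) \<Rightarrow> 'v set \<Rightarrow> bool" where
  "countable_dim sc V \<longleftrightarrow> (\<exists>B. countable B \<and> B \<subseteq> V \<and> module.span sc B = V)"

definition lie_subalgebra :: "(complex \<Rightarrow> 'g::ab_group_add \<Rightarrow> 'g) \<Rightarrow> ('g \<Rightarrow> 'g \<Rightarrow> 'g) \<Rightarrow> 'g set \<Rightarrow> bool" where
  "lie_subalgebra sg br A \<longleftrightarrow> module.subspace sg A \<and> (\<forall>x\<in>A. \<forall>y\<in>A. br x y \<in> A)"

definition lie_ideal :: "(complex \<Rightarrow> 'g::ab_group_add \<Rightarrow> 'g) \<Rightarrow> ('g \<Rightarrow> 'g \<Rightarrow> 'g) \<Rightarrow> 'g set \<Rightarrow> bool" where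
  "lie_ideal sg br B \<longleftrightarrow> module.subspace sg B \<and> (\<forall>x. \<forall>y\<in>B. br x y \<in> B)"

definition lie_module ::
  "(complex \<Rightarrow> 'g::ab_group_add \<Rightarrow> 'g) \<Rightarrow> ('g \<Rightarrow> 'g \<Rightarrow> 'g) \<Rightarrow> 'g set \<Rightarrow>
   (complex \<Rightarrow> 'v::ab_group_add \<Rightarrow> 'v) \<Rightarrow> 'v set \<Rightarrow> ('g \<Rightarrow> 'v \<Rightarrow> 'v) \<Rightarrow> bool" where
  "lie_module sg br S sv V rho \<longleftrightarrow>
     module.subspace sv V \<and>
     (\<forall>x\<in>S. \<forall>v\<in>V. rho x v \<in> V) \<and>
     (\<forall>x\<in>S. \<forall>y\<in>S. \<forall>v\<in>V. rho (x + y) v = rho x v + rho y v) \<and>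
     (\<forall>c. \<forall>x\<in>S. \<forall>v\<in>V. rho (sg c x) v = sv c (rho x v)) \<and>
     (\<forall>x\<in>S. \<forall>v\<in>V. \<forall>w\<in>V. rho x (v + w) = rho x v + rho x w) \<and>
     (\<forall>c. \<forall>x\<in>S. \<forall>v\<in>V. rho x (sv c v) = sv c (rho x v)) \<and>
     (\<forall>x\<in>S. \<forall>y\<in>S. \<forall>v\<in>V. rho (br x y) v = rho x (rho y v) - rho y (rho x v))"

definition simple_lie_module ::
  "(complex \<Rightarrow> 'g::ab_group_add \<Rightarrow> 'g) \<Rightarrow> ('g \<Rightarrow> 'g \<Rightarrow> 'g) \<Rightarrow> 'g set \<Rightarrow>
   (complex \<Rightarrow> 'v::ab_group_add \<Rightarrow> 'v) \<Rightarrow> 'v set \<Rightarrow> ('g \<Rightarrow> 'v \<Rightarrow> 'v) \<Rightarrow> bool" where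
  "simple_lie_module sg br S sv V rho \<longleftrightarrow>
     lie_module sg br S sv V rho \<and> V \<noteq> {0} \<and>
     (\<forall>W. W \<subseteq> V \<and> module.subspace sv W \<and> (\<forall>x\<in>S. \<forall>w\<in>W. rho x w \<in> W)
          \<longrightarrow> W = {0} \<or> W = V)"

definition sd_proj :: "'g set \<Rightarrow> 'g set \<Rightarrow> 'g::ab_group_add \<Rightarrow> 'g" where
  "sd_proj A B x = (THE y. y \<in> A \<and> x - y \<in> B)"

text \<open>Tensor product H (x) U of vector spaces, constructed as the free vector space
  on H x U (finitely supported functions H x U -> complex) modulo the subspace spanned
  by the bilinearity relations.\<close>

definition fdelta :: "'h \<Rightarrow> 'u \<Rightarrow> complex \<Rightarrow> ('h \<times> 'u \<Rightarrow> complex)" where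
  "fdelta h u c = (\<lambda>p. if p = (h, u) then c else 0)"

definition free_space :: "'h set \<Rightarrow> 'u set \<Rightarrow> ('h \<times> 'u \<Rightarrow> complex) set" where
  "free_space H U = {f. finite {p. f p \<noteq> 0} \<and> {p. f p \<noteq> 0} \<subseteq> H \<times> U}"

inductive_set tensor_relations ::
  "(complex \<Rightarrow> 'h::ab_group_add \<Rightarrow> 'h) \<Rightarrow> (complex \<Rightarrow> 'u::ab_group_add \<Rightarrow> 'u) \<Rightarrow>
   'h set \<Rightarrow> 'u set \<Rightarrow> ('h \<times> 'u \<Rightarrow> complex) set"
  for sh su H U where
  rel_zero: "(\<lambda>_. 0) \<in> tensor_relations sh su H U"
| rel_add: "f \<in> tensor_relations sh su H U \<Longrightarrow> g \<in> tensor_relations sh su H U \<Longrightarrow>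
     (\<lambda>p. f p + g p) \<in> tensor_relations sh su H U"
| rel_smult: "f \<in> tensor_relations sh su H U \<Longrightarrow> (\<lambda>p. c * f p) \<in> tensor_relations sh su H U"
| rel_ladd: "h \<in> H \<Longrightarrow> h' \<in> H \<Longrightarrow> u \<in> U \<Longrightarrow>
     (\<lambda>p. fdelta (h + h') u 1 p - fdelta h u 1 p - fdelta h' u 1 p) \<in> tensor_relations sh su H U"
| rel_lsmult: "h \<in> H \<Longrightarrow> u \<in> U \<Longrightarrow>
     (\<lambda>p. fdelta (sh c h) u 1 p - fdelta h u c p) \<in> tensor_relations sh su H U"
| rel_radd: "h \<in> H \<Longrightarrow> u \<in> U \<Longrightarrow> u' \<in> U \<Longrightarrow>
     (\<lambda>p. fdelta h (u + u') 1 p - fdelta h u 1 p - fdelta h u' 1 p) \<in> tensor_relations sh su H U"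
| rel_rsmult: "h \<in> H \<Longrightarrow> u \<in> U \<Longrightarrow>
     (\<lambda>p. fdelta h (su c u) 1 p - fdelta h u c p) \<in> tensor_relations sh su H U"

definition eval_free :: "(complex \<Rightarrow> 'm::ab_group_add \<Rightarrow> 'm) \<Rightarrow> ('h \<Rightarrow> 'u \<Rightarrow> 'm) \<Rightarrow> ('h \<times> 'u \<Rightarrow> complex) \<Rightarrow> 'm" where
  "eval_free sm beta f = (\<Sum>p\<in>{p. f p \<noteq> 0}. sm (f p) (beta (fst p) (snd p)))"

text \<open>The linear map free_space H U -> M sending (h,u) to beta h u is onto M with kernel
  exactly the relation subspace; i.e. it induces a linear isomorphism
  H (x) U = free/relations -> M with h (x) u mapped to beta h u.\<close>

definition tensor_presentation ::
  "(complex \<Rightarrow> 'h::ab_group_add \<Rightarrow> 'h) \<Rightarrow> (complex \<Rightarrow> 'u::ab_group_add \<Rightarrow> 'u) \<Rightarrow>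
   (complex \<Rightarrow> 'm::ab_group_add \<Rightarrow> 'm) \<Rightarrow> 'h set \<Rightarrow> 'u set \<Rightarrow> 'm set \<Rightarrow> ('h \<Rightarrow> 'u \<Rightarrow> 'm) \<Rightarrow> bool" where
  "tensor_presentation sh su sm H U M beta \<longleftrightarrow>
     eval_free sm beta ` free_space H U = M \<and>
     (\<forall>f\<in>free_space H U. eval_free sm beta f = 0 \<longleftrightarrow> f \<in> tensor_relations sh su H U)"

end

theory Submission
  imports Defs "HOL-Computational_Algebra.Fundamental_Theorem_Algebra"
begin

(*
  Fix h0 <> 0 in H and let U be Hom_b(H, M), each homomorphism phi represented by phi(h0).
  Then beta(h, phi) = phi(h) is bilinear, and (x.phi)(h) = x phi(h) - phi(sigma_x h) is again
  a b-homomorphism; this makes U an a-module with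
  x beta(h, phi) = beta(sigma_x h, phi) + beta(h, pi_a(x).phi).
  Countable dimension gives Dixmier's lemma End_b(H) = C: otherwise the vectors
  (f - z)^-1 h0, z in C, would be uncountably many independent vectors of the countably
  spanned space M.  Combined with a density argument for the operators generated by rho(b),
  it shows that sum_u beta(k_u, u) = 0 with independent u forces all k_u = 0, i.e. beta is
  injective on H (x) U.  Surjectivity and the simplicity of U follow because for every
  a-stable subspace W of U the span of beta(H, W) is a g-submodule of the simple module M.
*)

(* The vector notation *s of HOL-Analysis clashes with the infix *s of the locale vector_space. *)
no_notation vector_scalar_mult (infixl \<open>*s\<close> 70)

section \<open>Dixmier's spectral argument\<close>

lemma (in vector_space) independent_countable:
  assumes ind: "independent A" and A_span: "A \<subseteq> span B" and "countable B"
  shows "countable A"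
proof -
  have "\<exists>F. finite F \<and> F \<subseteq> B \<and> x \<in> span F" if "x \<in> A" for x
  proof -
    obtain t r where t: "finite t" "t \<subseteq> B" "x = (\<Sum>a\<in>t. r a *s a)"
      using A_span \<open>x \<in> A\<close> unfolding span_explicit by blast
    moreover have "x \<in> span t" unfolding t(3) by (intro span_sum span_scale span_base)
    ultimately show ?thesis by blast
  qed
  then obtain g where g: "\<And>x. x \<in> A \<Longrightarrow> finite (g x) \<and> g x \<subseteq> B \<and> x \<in> span (g x)"
    by metis
  have finite_fibre: "finite {x\<in>A. g x = F}" if "F \<in> g ` A" for F
  proof (rule independent_span_bound[THEN conjunct1])
    show "finite F" using that g by auto
    show "independent {x\<in>A. g x = F}" using ind by (rule independent_mono) auto
    show "{x\<in>A. g x = F} \<subseteq> span F" using g by auto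
  qed
  have "g ` A \<subseteq> {F. finite F \<and> F \<subseteq> B}" using g by auto
  then have "countable (g ` A)"
    using countable_Collect_finite_subset[OF \<open>countable B\<close>] countable_subset by blast
  then have "countable (\<Union>F\<in>g ` A. {x\<in>A. g x = F})"
    by (intro countable_UN) (auto intro: countable_finite finite_fibre)
  moreover have "A = (\<Union>F\<in>g ` A. {x\<in>A. g x = F})" by auto
  ultimately show ?thesis by simp
qed

locale linear_endomorphism_on = vector_space scale
  for scale :: "'a::field \<Rightarrow> 'b::ab_group_add \<Rightarrow> 'b" (infixr \<open>*s\<close> 75) +
  fixes H :: "'b set" and f :: "'b \<Rightarrow> 'b"
  assumes subspace_H: "subspace H"
    and f_in: "h \<in> H \<Longrightarrow> f h \<in> H"
    and f_add: "h \<in> H \<Longrightarrow> h' \<in> H \<Longrightarrow> f (h + h') = f h + f h'"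
    and f_scale: "h \<in> H \<Longrightarrow> f (c *s h) = c *s f h"
begin

lemma f_zero [simp]: "f 0 = 0"
  using f_scale[of 0 0] subspace_0[OF subspace_H] by simp

definition poly_apply :: "'a poly \<Rightarrow> 'b \<Rightarrow> 'b" where
  "poly_apply p = fold_coeffs (\<lambda>c g v. c *s v + f (g v)) p (\<lambda>v. 0)"

lemma poly_apply_0 [simp]: "poly_apply 0 v = 0"
  by (simp add: poly_apply_def)

lemma poly_apply_pCons: "poly_apply (pCons c p) h = c *s h + f (poly_apply p h)"
  by (cases "c = 0 \<and> p = 0") (auto simp: poly_apply_def f_zero)

lemma poly_apply_in: "h \<in> H \<Longrightarrow> poly_apply p h \<in> H"
  by (induction p)
    (auto simp: poly_apply_pCons f_in subspace_0 subspace_add subspace_scale subspace_H)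

lemma poly_apply_add:
  assumes "h \<in> H" "h' \<in> H"
  shows "poly_apply p (h + h') = poly_apply p h + poly_apply p h'"
  by (induction p) (simp_all add: poly_apply_pCons f_add poly_apply_in assms scale_right_distrib)

lemma poly_apply_scale:
  assumes "h \<in> H" shows "poly_apply p (d *s h) = d *s poly_apply p h"
  by (induction p)
    (simp_all add: poly_apply_pCons f_scale poly_apply_in assms scale_right_distrib mult.commute)

lemma poly_apply_0_right [simp]: "poly_apply p 0 = 0"
  using poly_apply_scale[of 0 p 0] subspace_0[OF subspace_H] by simp

lemma poly_apply_sum:
  "(\<And>i. i \<in> S \<Longrightarrow> g i \<in> H) \<Longrightarrow> poly_apply p (sum g S) = (\<Sum>i\<in>S. poly_apply p (g i))"
proof (induction S rule: infinite_finite_induct)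
  case (insert x F)
  then show ?case by (simp add: poly_apply_add subspace_sum[OF subspace_H])
qed simp_all

lemma poly_apply_plus:
  assumes "h \<in> H" shows "poly_apply (p + q) h = poly_apply p h + poly_apply q h"
proof (induction p q rule: poly_induct2)
  case (pCons c p d q)
  then show ?case
    by (simp add: poly_apply_pCons f_add poly_apply_in assms scale_left_distrib algebra_simps)
qed simp

lemma poly_apply_smult:
  assumes "h \<in> H" shows "poly_apply (smult d p) h = d *s poly_apply p h"
  by (induction p) (simp_all add: poly_apply_pCons f_scale poly_apply_in assms scale_right_distrib)

lemma poly_apply_sum_poly:
  assumes "h \<in> H" shows "poly_apply (sum q S) h = (\<Sum>i\<in>S. poly_apply (q i) h)"
  by (induction S rule: infinite_finite_induct) (simp_all add: poly_apply_plus assms)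

lemma poly_apply_mult:
  assumes "h \<in> H" shows "poly_apply (p * q) h = poly_apply p (poly_apply q h)"
proof (induction p)
  case (pCons c p)
  have "poly_apply (pCons c p * q) h = poly_apply (smult c q) h + poly_apply (pCons 0 (p * q)) h"
    using poly_apply_plus[OF assms] by simp
  then show ?case
    using pCons by (simp add: poly_apply_smult poly_apply_pCons assms poly_apply_in)
qed simp

lemma poly_apply_const: "h \<in> H \<Longrightarrow> poly_apply [:c:] h = c *s h"
  by (simp add: poly_apply_pCons f_zero)

lemma poly_apply_linear: "h \<in> H \<Longrightarrow> poly_apply [:- z, 1:] h = f h - z *s h"
  by (simp add: poly_apply_pCons poly_apply_const scale_minus_left)

end

locale complex_endomorphism_on = linear_endomorphism_on scale H f
  for scale :: "complex \<Rightarrow> 'b::ab_group_add \<Rightarrow> 'b" (infixr \<open>*s\<close> 75) and H f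
begin

lemma shift_nonzero:
  assumes "inj_on (\<lambda>h. f h - z *s h) H" "h \<in> H" "h \<noteq> 0"
  shows "f h - z *s h \<noteq> 0"
  using inj_onD[OF assms(1), of h 0] assms(2,3) subspace_0[OF subspace_H] by auto

lemma poly_apply_nonzero:
  assumes inj: "\<And>z. inj_on (\<lambda>h. f h - z *s h) H"
    and "p \<noteq> 0" "h \<in> H" "h \<noteq> 0"
  shows "poly_apply p h \<noteq> 0"
proof -
  obtain r where r: "smult (lead_coeff p) (\<Prod>i<degree p. [:- r i, 1:]) = p"
    using complex_poly_decompose' by blast
  have "poly_apply (\<Prod>i<n. [:- r i, 1:]) h \<noteq> 0" if "h \<in> H" "h \<noteq> 0" for n h
    using that
  proof (induction n arbitrary: h)
    case 0
    then show ?case using poly_apply_const[of h 1] by (simp add: one_pCons)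
  next
    case (Suc n)
    have "f h - r n *s h \<noteq> 0" using shift_nonzero[OF inj Suc.prems] .
    moreover have "f h - r n *s h \<in> H"
      using Suc.prems by (simp add: f_in subspace_diff subspace_scale subspace_H)
    moreover have "poly_apply (\<Prod>i<Suc n. [:- r i, 1:]) h
        = poly_apply (\<Prod>i<n. [:- r i, 1:]) (f h - r n *s h)"
      by (simp only: prod.lessThan_Suc poly_apply_mult[OF Suc.prems(1)]
          poly_apply_linear[OF Suc.prems(1)])
    ultimately show ?case using Suc.IH by simp
  qed
  moreover have "poly_apply (smult (lead_coeff p) (\<Prod>i<degree p. [:- r i, 1:])) h
      = lead_coeff p *s poly_apply (\<Prod>i<degree p. [:- r i, 1:]) h"
    by (rule poly_apply_smult[OF \<open>h \<in> H\<close>])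
  then have "poly_apply p h = lead_coeff p *s poly_apply (\<Prod>i<degree p. [:- r i, 1:]) h"
    by (simp only: r)
  ultimately show ?thesis using assms by simp
qed

lemma resolvent_coefficient_zero:
  assumes inj: "\<And>z. inj_on (\<lambda>h. f h - z *s h) H"
    and v: "\<And>c. v c \<in> H" "\<And>c. f (v c) - c *s v c = h0" and "h0 \<noteq> 0"
    and F: "finite F" "(\<Sum>c\<in>F. co c *s v c) = 0" "c0 \<in> F"
  shows "co c0 = 0"
proof (rule ccontr)
  assume "co c0 \<noteq> 0"
  have h0: "h0 \<in> H" using v(2)[of 0] f_in[OF v(1)[of 0]] by simp
  define Q where "Q c = (\<Prod>d\<in>F-{c}. [:- d, 1:])" for c
  define q where "q = (\<Sum>c\<in>F. smult (co c) (Q c))"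
  \<comment> \<open>Applying \<open>\<Prod>d\<in>F. (X - d)\<close> to the relation leaves \<open>q(f) h0 = 0\<close>, and \<open>q(c0) \<noteq> 0\<close>.\<close>
  have Q_v: "poly_apply (\<Prod>d\<in>F. [:- d, 1:]) (v c) = poly_apply (Q c) h0" if "c \<in> F" for c
  proof -
    have "(\<Prod>d\<in>F. [:- d, 1:]) = Q c * [:- c, 1:]"
      unfolding Q_def using prod.remove[OF F(1) that, of "\<lambda>d. [:- d, 1:]"] by
        (simp add: mult.commute)
    then show ?thesis by (simp only: poly_apply_mult[OF v(1)] poly_apply_linear[OF v(1)] v(2))
  qed
  have "poly_apply q h0 = (\<Sum>c\<in>F. co c *s poly_apply (\<Prod>d\<in>F. [:- d, 1:]) (v c))"
    unfolding q_def by (simp add: poly_apply_sum_poly poly_apply_smult h0 Q_v)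
  also have "\<dots> = poly_apply (\<Prod>d\<in>F. [:- d, 1:]) (\<Sum>c\<in>F. co c *s v c)"
    using v by (simp add: poly_apply_sum poly_apply_scale subspace_scale subspace_H)
  finally have "poly_apply q h0 = 0" using F(2) by simp
  moreover have "poly (Q c) c0 = 0" if "c \<in> F - {c0}" for c
    unfolding Q_def poly_prod using that F(1,3) by (intro prod_zero) auto
  then have "poly q c0 = co c0 * poly (Q c0) c0"
    unfolding q_def poly_sum using sum.remove[OF F(1,3), of "\<lambda>c. co c * poly (Q c) c0"]
    by (simp add: sum.neutral)
  then have "poly q c0 \<noteq> 0"
    using \<open>co c0 \<noteq> 0\<close> F(1) by (simp add: Q_def poly_prod prod_zero_iff)
  then have "q \<noteq> 0" by auto
  ultimately show False using poly_apply_nonzero[OF inj _ h0 \<open>h0 \<noteq> 0\<close>] by blast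
qed

lemma resolvents_independent:
  assumes inj: "\<And>z. inj_on (\<lambda>h. f h - z *s h) H"
    and v: "\<And>c. v c \<in> H" "\<And>c. f (v c) - c *s v c = h0" and "h0 \<noteq> 0"
  shows "inj v" "independent (range v)"
proof -
  show "inj v"
  proof (rule injI)
    fix c d assume "v c = v d"
    then have "f (v d) - c *s v d = f (v d) - d *s v d"
      using v(2)[of c] v(2)[of d] by simp
    then have "c *s v d = d *s v d" by simp
    moreover have "v d \<noteq> 0" using v(2)[of d] \<open>h0 \<noteq> 0\<close> by auto
    ultimately show "c = d" by simp
  qed
  show "independent (range v)"
  proof
    assume "dependent (range v)"
    then obtain t u where t: "finite t" "t \<subseteq> range v" "(\<Sum>w\<in>t. u w *s w) = 0" "\<exists>w\<in>t. u w \<noteq> 0"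
      unfolding dependent_explicit by blast
    define F where "F = v -` t"
    have t_eq: "t = v ` F" unfolding F_def using t(2) by auto
    have "finite F" unfolding F_def using t(1) \<open>inj v\<close> by (simp add: finite_vimageI)
    have sum0: "(\<Sum>c\<in>F. u (v c) *s v c) = 0"
      using t(3) sum.reindex[OF inj_on_subset[OF \<open>inj v\<close> subset_UNIV], of "\<lambda>w. u w *s w" F]
      unfolding t_eq by simp
    have "u (v c) = 0" if "c \<in> F" for c
      using resolvent_coefficient_zero[OF inj v \<open>h0 \<noteq> 0\<close> \<open>finite F\<close> sum0 that] .
    then show False using t(4) t_eq by auto
  qed
qed

theorem spectrum_nonempty:
  assumes "countable B" "H \<subseteq> span B" "H \<noteq> {0}"
  shows "\<exists>z. \<not> bij_betw (\<lambda>h. f h - z *s h) H H"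
proof (rule ccontr)
  assume "\<not> ?thesis"
  then have bij: "bij_betw (\<lambda>h. f h - z *s h) H H" for z by blast
  obtain h0 where h0: "h0 \<in> H" "h0 \<noteq> 0"
    using assms(3) subspace_0[OF subspace_H] by blast
  have "\<exists>w\<in>H. f w - z *s w = h0" for z
  proof -
    have "h0 \<in> (\<lambda>h. f h - z *s h) ` H"
      using bij_betw_imp_surj_on[OF bij[of z]] h0(1) by simp
    then obtain w where "w \<in> H" "h0 = f w - z *s w" by blast
    then show ?thesis by auto
  qed
  then obtain v where v: "\<And>c. v c \<in> H" "\<And>c. f (v c) - c *s v c = h0" by metis
  have "inj v" "independent (range v)"
    using resolvents_independent[OF bij_betw_imp_inj_on[OF bij] v h0(2)] by auto
  then have "countable (range v)"
    using independent_countable assms(1,2) v(1) by blast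
  then show False
    using countable_image_inj_on \<open>inj v\<close> uncountable_UNIV_complex by blast
qed

end

section \<open>Tensor products by generators and relations\<close>

lemma finite_support_delta: "finite {p. fdelta h u c p \<noteq> 0}"
  by (rule finite_subset[of _ "{(h, u)}"]) (auto simp: fdelta_def)

lemma finite_support_add:
  "finite {p. f p \<noteq> 0} \<Longrightarrow> finite {p. g p \<noteq> 0} \<Longrightarrow> finite {p. f p + g p \<noteq> (0::complex)}"
  by (rule finite_subset[of _ "{p. f p \<noteq> 0} \<union> {p. g p \<noteq> 0}"]) auto

lemma finite_support_scale: "finite {p. f p \<noteq> 0} \<Longrightarrow> finite {p. c * f p \<noteq> (0::complex)}"
  by (rule finite_subset[of _ "{p. f p \<noteq> 0}"]) auto

lemma finite_support_diff:
  "finite {p. f p \<noteq> 0} \<Longrightarrow> finite {p. g p \<noteq> 0} \<Longrightarrow> finite {p. f p - g p \<noteq> (0::complex)}"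
  by (rule finite_subset[of _ "{p. f p \<noteq> 0} \<union> {p. g p \<noteq> 0}"]) auto

lemma finite_support_sum:
  "finite I \<Longrightarrow> (\<And>i. i \<in> I \<Longrightarrow> finite {p. F i p \<noteq> 0}) \<Longrightarrow>
    finite {p. (\<Sum>i\<in>I. F i p) \<noteq> (0::complex)}"
  by (rule finite_subset[of _ "\<Union>i\<in>I. {p. F i p \<noteq> 0}"]) (auto intro: sum.neutral)

lemma free_space_delta: "h \<in> H \<Longrightarrow> u \<in> U \<Longrightarrow> fdelta h u c \<in> free_space H U"
  unfolding free_space_def using finite_support_delta[of h u c] by (auto simp: fdelta_def)

lemma free_space_add:
  assumes "f \<in> free_space H U" "g \<in> free_space H U"
  shows "(\<lambda>p. f p + g p) \<in> free_space H U"
proof -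
  have "{p. f p + g p \<noteq> 0} \<subseteq> {p. f p \<noteq> 0} \<union> {p. g p \<noteq> 0}" by auto
  then show ?thesis using assms finite_support_add[of f g] unfolding free_space_def by blast
qed

lemma free_space_scale: "f \<in> free_space H U \<Longrightarrow> (\<lambda>p. c * f p) \<in> free_space H U"
  unfolding free_space_def using finite_support_scale[of f c] by auto

lemma free_space_diff: "f \<in> free_space H U \<Longrightarrow> g \<in> free_space H U \<Longrightarrow> (\<lambda>p. f p - g p) \<in> free_space H U"
  using free_space_add[of f H U "\<lambda>p. (-1) * g p"] free_space_scale[of g H U "-1"] by simp

lemma free_space_support_decomposition:
  assumes "finite {p. f p \<noteq> 0}"
  shows "f = (\<lambda>q. \<Sum>p\<in>{p. f p \<noteq> 0}. fdelta (fst p) (snd p) (f p) q)"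
proof
  fix q
  have "(\<Sum>p\<in>{p. f p \<noteq> 0}. fdelta (fst p) (snd p) (f p) q)
      = (\<Sum>p\<in>{p. f p \<noteq> 0}. if q = p then f p else 0)"
    by (intro sum.cong) (auto simp: fdelta_def)
  also have "\<dots> = f q" using assms by simp
  finally show "f q = (\<Sum>p\<in>{p. f p \<noteq> 0}. fdelta (fst p) (snd p) (f p) q)" by simp
qed

locale complex_vector_space = vector_space scale
  for scale :: "complex \<Rightarrow> 'b::ab_group_add \<Rightarrow> 'b" (infixr \<open>*s\<close> 75)

context complex_vector_space
begin

lemma eval_free_superset:
  assumes "finite S" "{p. f p \<noteq> 0} \<subseteq> S"
  shows "eval_free scale beta f = (\<Sum>p\<in>S. f p *s beta (fst p) (snd p))"
  unfolding eval_free_def by (rule sum.mono_neutral_left) (use assms in auto)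

lemma eval_free_add:
  assumes "finite {p. f p \<noteq> 0}" "finite {p. g p \<noteq> 0}"
  shows "eval_free scale beta (\<lambda>p. f p + g p) = eval_free scale beta f + eval_free scale beta g"
proof -
  let ?S = "{p. f p \<noteq> 0} \<union> {p. g p \<noteq> 0}"
  have "eval_free scale beta (\<lambda>p. f p + g p) = (\<Sum>p\<in>?S. (f p + g p) *s beta (fst p) (snd p))"
    by (rule eval_free_superset) (use assms in auto)
  also have "\<dots> = (\<Sum>p\<in>?S. f p *s beta (fst p) (snd p)) + (\<Sum>p\<in>?S. g p *s beta (fst p) (snd p))"
    by (simp add: scale_left_distrib sum.distrib)
  also have "\<dots> = eval_free scale beta f + eval_free scale beta g"
    by (subst (1 2) eval_free_superset[of ?S]) (use assms in auto)
  finally show ?thesis .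
qed

lemma eval_free_scale:
  assumes "finite {p. f p \<noteq> 0}"
  shows "eval_free scale beta (\<lambda>p. c * f p) = c *s eval_free scale beta f"
proof -
  have "eval_free scale beta (\<lambda>p. c * f p) = (\<Sum>p\<in>{p. f p \<noteq> 0}. (c * f p) *s beta (fst p) (snd p))"
    by (rule eval_free_superset) (use assms in auto)
  then show ?thesis unfolding eval_free_def by (simp add: scale_sum_right)
qed

lemma eval_free_zero [simp]: "eval_free scale beta (\<lambda>p. 0) = 0"
  unfolding eval_free_def by simp

lemma eval_free_delta [simp]: "eval_free scale beta (fdelta h u c) = c *s beta h u"
proof -
  have "eval_free scale beta (fdelta h u c) = (\<Sum>p\<in>{(h, u)}. fdelta h u c p *s beta (fst p) (snd p))"
    by (rule eval_free_superset) (auto simp: fdelta_def)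
  then show ?thesis by (simp add: fdelta_def)
qed

lemma eval_free_diff:
  assumes "finite {p. f p \<noteq> 0}" "finite {p. g p \<noteq> 0}"
  shows "eval_free scale beta (\<lambda>p. f p - g p) = eval_free scale beta f - eval_free scale beta g"
  using eval_free_add[OF assms(1) finite_support_scale[OF assms(2)], of beta "-1"]
    eval_free_scale[OF assms(2), of beta "-1"] by (simp add: scale_minus_left)

lemma eval_free_sum:
  assumes "finite I" "\<And>i. i \<in> I \<Longrightarrow> finite {p. F i p \<noteq> 0}"
  shows "eval_free scale beta (\<lambda>p. \<Sum>i\<in>I. F i p) = (\<Sum>i\<in>I. eval_free scale beta (F i))"
  using assms
proof (induction I rule: finite_induct)
  case (insert x I)
  then show ?case
    using eval_free_add[of "F x" "\<lambda>p. \<Sum>i\<in>I. F i p" beta] finite_support_sum[of I F] by simp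
qed simp

lemma eval_free_image_subspace: "subspace (eval_free scale beta ` free_space H U)"
  unfolding subspace_def
proof (intro conjI ballI allI)
  have "(\<lambda>p. 0) \<in> free_space H U" unfolding free_space_def by simp
  then show "0 \<in> eval_free scale beta ` free_space H U" by (metis eval_free_zero image_eqI)
next
  fix x y
  assume "x \<in> eval_free scale beta ` free_space H U" "y \<in> eval_free scale beta ` free_space H U"
  then obtain f g where fg: "f \<in> free_space H U" "g \<in> free_space H U"
    "x = eval_free scale beta f" "y = eval_free scale beta g" by blast
  then have "x + y = eval_free scale beta (\<lambda>p. f p + g p)"
    using eval_free_add[of f g beta] unfolding free_space_def by simp
  then show "x + y \<in> eval_free scale beta ` free_space H U" using free_space_add[OF fg(1,2)]
    by blast
next
  fix c x assume "x \<in> eval_free scale beta ` free_space H U"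
  then obtain f where f: "f \<in> free_space H U" "x = eval_free scale beta f" by blast
  then have "c *s x = eval_free scale beta (\<lambda>p. c * f p)"
    using eval_free_scale[of f beta c] unfolding free_space_def by simp
  then show "c *s x \<in> eval_free scale beta ` free_space H U" using free_space_scale[OF f(1)]
    by blast
qed

definition bilinear_on :: "'b set \<Rightarrow> 'b set \<Rightarrow> ('b \<Rightarrow> 'b \<Rightarrow> 'b) \<Rightarrow> bool" where
  "bilinear_on H U beta \<longleftrightarrow>
     (\<forall>h\<in>H. \<forall>h'\<in>H. \<forall>u\<in>U. beta (h + h') u = beta h u + beta h' u) \<and>
     (\<forall>c. \<forall>h\<in>H. \<forall>u\<in>U. beta (c *s h) u = c *s beta h u) \<and>
     (\<forall>h\<in>H. \<forall>u\<in>U. \<forall>u'\<in>U. beta h (u + u') = beta h u + beta h u') \<and>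
     (\<forall>c. \<forall>h\<in>H. \<forall>u\<in>U. beta h (c *s u) = c *s beta h u)"

lemma eval_free_delta_diff:
  "eval_free scale beta (\<lambda>p. fdelta h u 1 p - fdelta h' u' c p) = beta h u - c *s beta h' u'"
  by (subst eval_free_diff) (simp_all add: finite_support_delta)

lemma eval_free_delta_diff_diff:
  "eval_free scale beta (\<lambda>p. fdelta h u 1 p - fdelta h' u' 1 p - fdelta h'' u'' 1 p)
    = beta h u - beta h' u' - beta h'' u''"
proof -
  have "eval_free scale beta (\<lambda>p. fdelta h u 1 p - fdelta h' u' 1 p - fdelta h'' u'' 1 p)
      = eval_free scale beta (\<lambda>p. fdelta h u 1 p - fdelta h' u' 1 p)
        - eval_free scale beta (fdelta h'' u'' 1)"
    by (rule eval_free_diff) (rule finite_support_diff finite_support_delta)+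
  then show ?thesis by (simp add: eval_free_delta_diff)
qed

lemma tensor_relations_eval:
  assumes "f \<in> tensor_relations scale scale H U"
    and "subspace H" "subspace U" "bilinear_on H U beta"
  shows "f \<in> free_space H U \<and> eval_free scale beta f = 0"
  using assms(1)
proof (induction rule: tensor_relations.induct)
  case rel_zero
  then show ?case by (simp add: free_space_def)
next
  case (rel_add f g)
  then have "(\<lambda>p. f p + g p) \<in> free_space H U" using free_space_add by blast
  moreover have "eval_free scale beta (\<lambda>p. f p + g p) = 0"
    using rel_add by (simp add: eval_free_add free_space_def)
  ultimately show ?case by blast
next
  case (rel_smult f c)
  then have "(\<lambda>p. c * f p) \<in> free_space H U" using free_space_scale by blast
  moreover have "eval_free scale beta (\<lambda>p. c * f p) = 0"
    using rel_smult by (simp add: eval_free_scale free_space_def)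
  ultimately show ?case by blast
next
  case (rel_ladd h h' u)
  then show ?case
    using assms(2-4) by (auto simp: bilinear_on_def eval_free_delta_diff_diff free_space_diff
        free_space_delta subspace_add)
next
  case (rel_lsmult h u c)
  then show ?case
    using assms(2-4) by (auto simp: bilinear_on_def eval_free_delta_diff free_space_diff
        free_space_delta subspace_scale)
next
  case (rel_radd h u u')
  then show ?case
    using assms(2-4) by (auto simp: bilinear_on_def eval_free_delta_diff_diff free_space_diff
        free_space_delta subspace_add)
next
  case (rel_rsmult h u c)
  then show ?case
    using assms(2-4) by (auto simp: bilinear_on_def eval_free_delta_diff free_space_diff
        free_space_delta subspace_scale)
qed


definition tensor_equiv ::
  "'b set \<Rightarrow> 'b set \<Rightarrow> ('b \<times> 'b \<Rightarrow> complex) \<Rightarrow> ('b \<times> 'b \<Rightarrow> complex) \<Rightarrow> bool" where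
  "tensor_equiv H U f g \<longleftrightarrow> (\<lambda>p. f p - g p) \<in> tensor_relations scale scale H U"

lemma tensor_relations_diff:
  "f \<in> tensor_relations scale scale H U \<Longrightarrow> g \<in> tensor_relations scale scale H U \<Longrightarrow>
    (\<lambda>p. f p - g p) \<in> tensor_relations scale scale H U"
  using rel_add[OF _ rel_smult[of g _ _ _ _ "-1"], of f] by simp

lemma tensor_equiv_refl: "tensor_equiv H U f f"
  unfolding tensor_equiv_def using rel_zero by simp

lemma tensor_equiv_sym: "tensor_equiv H U f g \<Longrightarrow> tensor_equiv H U g f"
  unfolding tensor_equiv_def using tensor_relations_diff[OF rel_zero, of "\<lambda>p. f p - g p"] by simp

lemma tensor_equiv_trans [trans]:
  "tensor_equiv H U f g \<Longrightarrow> tensor_equiv H U g k \<Longrightarrow> tensor_equiv H U f k"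
  unfolding tensor_equiv_def using rel_add[of "\<lambda>p. f p - g p" _ _ _ _ "\<lambda>p. g p - k p"] by simp

lemma tensor_equiv_add:
  "tensor_equiv H U f f' \<Longrightarrow> tensor_equiv H U g g' \<Longrightarrow>
    tensor_equiv H U (\<lambda>p. f p + g p) (\<lambda>p. f' p + g' p)"
  unfolding tensor_equiv_def using rel_add[of "\<lambda>p. f p - f' p" _ _ _ _ "\<lambda>p. g p - g' p"]
  by (simp add: algebra_simps)

lemma tensor_equiv_sum:
  "finite I \<Longrightarrow> (\<And>i. i \<in> I \<Longrightarrow> tensor_equiv H U (F i) (G i)) \<Longrightarrow>
    tensor_equiv H U (\<lambda>p. \<Sum>i\<in>I. F i p) (\<lambda>p. \<Sum>i\<in>I. G i p)"
proof (induction I rule: finite_induct)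
  case empty
  then show ?case by (simp add: tensor_equiv_refl)
next
  case (insert x I)
  then show ?case
    using tensor_equiv_add[of H U "F x" "G x" "\<lambda>p. \<Sum>i\<in>I. F i p" "\<lambda>p. \<Sum>i\<in>I. G i p"] by simp
qed

lemma tensor_equiv_relations:
  "tensor_equiv H U f g \<Longrightarrow> g \<in> tensor_relations scale scale H U \<Longrightarrow>
    f \<in> tensor_relations scale scale H U"
  unfolding tensor_equiv_def using rel_add[of "\<lambda>p. f p - g p" _ _ _ _ g] by simp

lemma tensor_equiv_scale_left:
  "h \<in> H \<Longrightarrow> u \<in> U \<Longrightarrow> tensor_equiv H U (fdelta h u c) (fdelta (c *s h) u 1)"
  using tensor_equiv_sym rel_lsmult[of h H u U scale c scale] unfolding tensor_equiv_def by blast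

lemma tensor_equiv_scale_right:
  "h \<in> H \<Longrightarrow> u \<in> U \<Longrightarrow> tensor_equiv H U (fdelta h (c *s u) 1) (fdelta h u c)"
  using rel_rsmult[of h H u U scale c scale] unfolding tensor_equiv_def by blast

lemma tensor_equiv_add_left:
  "h \<in> H \<Longrightarrow> h' \<in> H \<Longrightarrow> u \<in> U \<Longrightarrow>
    tensor_equiv H U (fdelta (h + h') u 1) (\<lambda>p. fdelta h u 1 p + fdelta h' u 1 p)"
  using rel_ladd[of h H h' u U scale scale] unfolding tensor_equiv_def by (simp add: diff_diff_eq)

lemma tensor_equiv_add_right:
  "h \<in> H \<Longrightarrow> u \<in> U \<Longrightarrow> u' \<in> U \<Longrightarrow>
    tensor_equiv H U (fdelta h (u + u') 1) (\<lambda>p. fdelta h u 1 p + fdelta h u' 1 p)"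
  using rel_radd[of h H u U u' scale scale] unfolding tensor_equiv_def by (simp add: diff_diff_eq)

lemma tensor_equiv_zero_left: "subspace H \<Longrightarrow> u \<in> U \<Longrightarrow> tensor_equiv H U (fdelta 0 u 1) (\<lambda>p. 0)"
  using rel_lsmult[of 0 H u U scale 0 scale] subspace_0 unfolding tensor_equiv_def fdelta_def
    by simp

lemma tensor_equiv_zero_right: "subspace U \<Longrightarrow> h \<in> H \<Longrightarrow> tensor_equiv H U (fdelta h 0 1) (\<lambda>p. 0)"
  using rel_rsmult[of h H 0 U scale 0 scale] subspace_0 unfolding tensor_equiv_def fdelta_def
    by simp

lemma tensor_equiv_sum_right:
  assumes "subspace U" "h \<in> H" "finite I" "\<And>i. i \<in> I \<Longrightarrow> w i \<in> U"
  shows "tensor_equiv H U (fdelta h (\<Sum>i\<in>I. w i) 1) (\<lambda>p. \<Sum>i\<in>I. fdelta h (w i) 1 p)"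
  using assms(3,4)
proof (induction I rule: finite_induct)
  case empty
  then show ?case using tensor_equiv_zero_right[OF assms(1,2)] by simp
next
  case (insert x I)
  have "(\<Sum>i\<in>I. w i) \<in> U" using insert.prems by (intro subspace_sum[OF assms(1)]) auto
  then have "tensor_equiv H U (fdelta h (w x + (\<Sum>i\<in>I. w i)) 1)
      (\<lambda>p. fdelta h (w x) 1 p + fdelta h (\<Sum>i\<in>I. w i) 1 p)"
    using tensor_equiv_add_right[OF assms(2)] insert.prems by simp
  moreover have "tensor_equiv H U (\<lambda>p. fdelta h (w x) 1 p + fdelta h (\<Sum>i\<in>I. w i) 1 p)
      (\<lambda>p. fdelta h (w x) 1 p + (\<Sum>i\<in>I. fdelta h (w i) 1 p))"
    using tensor_equiv_add[OF tensor_equiv_refl insert.IH] insert.prems by simp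
  ultimately show ?case using insert.hyps tensor_equiv_trans by simp
qed

lemma tensor_equiv_sum_left:
  assumes "subspace H" "u \<in> U" "finite I" "\<And>i. i \<in> I \<Longrightarrow> g i \<in> H"
  shows "tensor_equiv H U (\<lambda>p. \<Sum>i\<in>I. fdelta (g i) u 1 p) (fdelta (\<Sum>i\<in>I. g i) u 1)"
  using assms(3,4)
proof (induction I rule: finite_induct)
  case empty
  then show ?case using tensor_equiv_sym[OF tensor_equiv_zero_left[OF assms(1,2)]] by simp
next
  case (insert x I)
  have "(\<Sum>i\<in>I. g i) \<in> H" using insert.prems by (intro subspace_sum[OF assms(1)]) auto
  then have "tensor_equiv H U (\<lambda>p. fdelta (g x) u 1 p + fdelta (\<Sum>i\<in>I. g i) u 1 p)
      (fdelta (g x + (\<Sum>i\<in>I. g i)) u 1)"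
    using tensor_equiv_sym[OF tensor_equiv_add_left[OF _ _ assms(2)]] insert.prems by simp
  moreover have "tensor_equiv H U (\<lambda>p. fdelta (g x) u 1 p + (\<Sum>i\<in>I. fdelta (g i) u 1 p))
      (\<lambda>p. fdelta (g x) u 1 p + fdelta (\<Sum>i\<in>I. g i) u 1 p)"
    using tensor_equiv_add[OF tensor_equiv_refl insert.IH] insert.prems by simp
  ultimately show ?case using insert.hyps tensor_equiv_trans by simp
qed

lemma tensor_equiv_delta_span:
  assumes "subspace H" "subspace U" "h \<in> H" "finite E" "E \<subseteq> U" "w \<in> span E"
  obtains k where "\<And>e. k e \<in> H" "tensor_equiv H U (fdelta h w c) (\<lambda>p. \<Sum>e\<in>E. fdelta (k e) e 1 p)"
proof -
  have "w \<in> range (\<lambda>r. \<Sum>e\<in>E. r e *s e)"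
    using assms(6) by (simp only: span_finite[OF assms(4)])
  then obtain r where w: "w = (\<Sum>e\<in>E. r e *s e)" by blast
  have ch: "c *s h \<in> H" using assms(1,3) by (rule subspace_scale)
  have "w \<in> U" unfolding w by (intro subspace_sum subspace_scale) (use assms in auto)
  with assms(3) have "tensor_equiv H U (fdelta h w c) (fdelta (c *s h) w 1)"
    by (rule tensor_equiv_scale_left)
  also have "tensor_equiv H U \<dots> (\<lambda>p. \<Sum>e\<in>E. fdelta (c *s h) (r e *s e) 1 p)"
    unfolding w by (rule tensor_equiv_sum_right) (use assms ch subspace_scale in auto)
  also have "tensor_equiv H U \<dots> (\<lambda>p. \<Sum>e\<in>E. fdelta (c *s h) e (r e) p)"
    by (rule tensor_equiv_sum) (use assms ch tensor_equiv_scale_right in auto)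
  also have "tensor_equiv H U \<dots> (\<lambda>p. \<Sum>e\<in>E. fdelta ((r e * c) *s h) e 1 p)"
  proof (rule tensor_equiv_sum[OF assms(4)])
    fix e assume "e \<in> E"
    then have "tensor_equiv H U (fdelta (c *s h) e (r e)) (fdelta (r e *s c *s h) e 1)"
      using ch assms(5) by (intro tensor_equiv_scale_left) auto
    then show "tensor_equiv H U (fdelta (c *s h) e (r e)) (fdelta ((r e * c) *s h) e 1)" by simp
  qed
  finally have equiv: "tensor_equiv H U (fdelta h w c) (\<lambda>p. \<Sum>e\<in>E. fdelta ((r e * c) *s h) e 1 p)" .
  show ?thesis
  proof (rule that)
    show "(r e * c) *s h \<in> H" for e using assms(1,3) by (rule subspace_scale)
  qed (fact equiv)
qed

lemma tensor_equiv_sum_normal: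
  assumes "subspace H" "finite P" "finite E" "E \<subseteq> U" "\<And>p e. p \<in> P \<Longrightarrow> K p e \<in> H"
    and equiv: "\<And>p. p \<in> P \<Longrightarrow> tensor_equiv H U (F p) (\<lambda>q. \<Sum>e\<in>E. fdelta (K p e) e 1 q)"
  shows "tensor_equiv H U (\<lambda>q. \<Sum>p\<in>P. F p q) (\<lambda>q. \<Sum>e\<in>E. fdelta (\<Sum>p\<in>P. K p e) e 1 q)"
proof -
  have "tensor_equiv H U (\<lambda>q. \<Sum>p\<in>P. F p q) (\<lambda>q. \<Sum>p\<in>P. \<Sum>e\<in>E. fdelta (K p e) e 1 q)"
    by (rule tensor_equiv_sum[OF assms(2)]) (rule equiv)
  also have "(\<lambda>q. \<Sum>p\<in>P. \<Sum>e\<in>E. fdelta (K p e) e 1 q) = (\<lambda>q. \<Sum>e\<in>E. \<Sum>p\<in>P. fdelta (K p e) e 1 q)"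
    by (rule ext, rule sum.swap)
  also have "tensor_equiv H U \<dots> (\<lambda>q. \<Sum>e\<in>E. fdelta (\<Sum>p\<in>P. K p e) e 1 q)"
    by (rule tensor_equiv_sum[OF assms(3)], rule tensor_equiv_sum_left) (use assms in auto)
  finally show ?thesis .
qed

lemma tensor_normal_form:
  assumes "subspace H" "subspace W" "f \<in> free_space H W"
  obtains E k where "finite E" "E \<subseteq> W" "independent E" "\<And>e. e \<in> E \<Longrightarrow> k e \<in> H"
    "tensor_equiv H W f (\<lambda>q. \<Sum>e\<in>E. fdelta (k e) e 1 q)"
proof -
  define P where "P = {p. f p \<noteq> 0}"
  have P: "finite P" "P \<subseteq> H \<times> W" using assms(3) unfolding P_def free_space_def by auto
  obtain E where E: "E \<subseteq> snd ` P" "independent E" "snd ` P \<subseteq> span E"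
    using maximal_independent_subset[of "snd ` P"] by blast
  have "finite E" using E(1) P(1) by (meson finite_imageI finite_subset)
  have "E \<subseteq> W" using E(1) P(2) by force
  have "\<exists>k. (\<forall>e. k e \<in> H) \<and>
      tensor_equiv H W (fdelta (fst p) (snd p) (f p)) (\<lambda>q. \<Sum>e\<in>E. fdelta (k e) e 1 q)"
    if "p \<in> P" for p
  proof -
    have "fst p \<in> H" "snd p \<in> span E" using that P(2) E(3) mem_Times_iff by blast+
    then show ?thesis
      using tensor_equiv_delta_span[OF assms(1,2) _ \<open>finite E\<close> \<open>E \<subseteq> W\<close>, of "fst p" "snd p" "f p"]
      by blast
  qed
  then have "\<exists>K. \<forall>p\<in>P. (\<forall>e. K p e \<in> H) \<and>
      tensor_equiv H W (fdelta (fst p) (snd p) (f p)) (\<lambda>q. \<Sum>e\<in>E. fdelta (K p e) e 1 q)"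
    by (intro bchoice) blast
  then obtain K where K: "\<And>p e. p \<in> P \<Longrightarrow> K p e \<in> H"
    "\<And>p. p \<in> P \<Longrightarrow> tensor_equiv H W (fdelta (fst p) (snd p) (f p)) (\<lambda>q. \<Sum>e\<in>E. fdelta (K p e) e 1 q)"
    by blast
  have f_eq: "(\<lambda>q. \<Sum>p\<in>P. fdelta (fst p) (snd p) (f p) q) = f"
    unfolding P_def by (rule free_space_support_decomposition[symmetric])
      (use P(1) in \<open>simp add: P_def\<close>)
  have "tensor_equiv H W (\<lambda>q. \<Sum>p\<in>P. fdelta (fst p) (snd p) (f p) q)
      (\<lambda>q. \<Sum>e\<in>E. fdelta (\<Sum>p\<in>P. K p e) e 1 q)"
    by (rule tensor_equiv_sum_normal[OF assms(1) P(1) \<open>finite E\<close> \<open>E \<subseteq> W\<close>]) (simp_all add: K)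
  then have equiv: "tensor_equiv H W f (\<lambda>q. \<Sum>e\<in>E. fdelta (\<Sum>p\<in>P. K p e) e 1 q)"
    by (simp only: f_eq)
  show ?thesis
  proof (rule that[of E "\<lambda>e. \<Sum>p\<in>P. K p e"])
    show "(\<Sum>p\<in>P. K p e) \<in> H" if "e \<in> E" for e
      using K(1) by (intro subspace_sum[OF assms(1)])
  qed (fact \<open>finite E\<close> \<open>E \<subseteq> W\<close> E(2) equiv)+
qed

lemma tensor_equiv_eval:
  assumes "subspace H" "subspace U" "bilinear_on H U beta" "tensor_equiv H U f g"
    "finite {p. f p \<noteq> 0}" "finite {p. g p \<noteq> 0}"
  shows "eval_free scale beta f = eval_free scale beta g"
  using tensor_relations_eval[OF assms(4)[unfolded tensor_equiv_def] assms(1-3)]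
    eval_free_diff[OF assms(5,6)] by simp

lemma eval_free_normal_form:
  "finite E \<Longrightarrow> eval_free scale beta (\<lambda>q. \<Sum>e\<in>E. fdelta (k e) e 1 q) = (\<Sum>e\<in>E. beta (k e) e)"
  by (simp add: eval_free_sum finite_support_delta)

end

section \<open>Simple modules over a semidirect product\<close>

locale semidirect_module =
  fixes sg :: "complex \<Rightarrow> 'g::ab_group_add \<Rightarrow> 'g" and br :: "'g \<Rightarrow> 'g \<Rightarrow> 'g"
    and a b :: "'g set"
    and sm :: "complex \<Rightarrow> 'm::ab_group_add \<Rightarrow> 'm" and rho :: "'g \<Rightarrow> 'm \<Rightarrow> 'm"
    and H :: "'m set" and sigma :: "'g \<Rightarrow> 'm \<Rightarrow> 'm"
  assumes lie_algebra: "lie_algebra sg br"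
    and countable_dim: "countable_dim sg UNIV"
    and subalgebra_a: "lie_subalgebra sg br a"
    and ideal_b: "lie_ideal sg br b"
    and a_inter_b: "a \<inter> b = {0}"
    and a_plus_b: "{x + y | x y. x \<in> a \<and> y \<in> b} = UNIV"
    and vector_space_M: "vector_space sm"
    and M_simple: "simple_lie_module sg br UNIV sm UNIV rho"
    and H_simple: "simple_lie_module sg br b sm H rho"
    and sigma_module: "lie_module sg br UNIV sm H sigma"
    and sigma_eq_rho: "\<forall>x\<in>b. \<forall>h\<in>H. sigma x h = rho x h"
begin

sublocale G: vector_space sg
  using lie_algebra unfolding lie_algebra_def by blast

sublocale M: complex_vector_space sm
  unfolding complex_vector_space_def by (rule vector_space_M)

lemma rho_module: "lie_module sg br UNIV sm UNIV rho"
  using M_simple unfolding simple_lie_module_def by blast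

lemma rho_add_left: "rho (x + y) v = rho x v + rho y v"
  and rho_scale_left: "rho (sg c x) v = sm c (rho x v)"
  and rho_add_right: "rho x (v + w) = rho x v + rho x w"
  and rho_scale_right: "rho x (sm c v) = sm c (rho x v)"
  and rho_bracket: "rho (br x y) v = rho x (rho y v) - rho y (rho x v)"
  using rho_module unfolding lie_module_def by blast+

lemma rho_zero_right [simp]: "rho x 0 = 0"
  using rho_add_right[of x 0 0] by simp

lemma rho_zero_left [simp]: "rho 0 v = 0"
  using rho_add_left[of 0 0 v] by simp

lemma rho_diff_right: "rho x (v - w) = rho x v - rho x w"
  using rho_add_right[of x "v - w" w] by (simp add: eq_diff_eq)

lemma M_irreducible: "M.subspace W \<Longrightarrow> (\<And>x w. w \<in> W \<Longrightarrow> rho x w \<in> W) \<Longrightarrow> W = {0} \<or> W = UNIV"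
  using M_simple unfolding simple_lie_module_def by blast

lemma H_nontrivial: "H \<noteq> {0}"
  using H_simple unfolding simple_lie_module_def by blast

lemma H_subspace: "M.subspace H"
  and rho_in_H: "x \<in> b \<Longrightarrow> h \<in> H \<Longrightarrow> rho x h \<in> H"
  using H_simple unfolding simple_lie_module_def lie_module_def by auto

lemma H_irreducible:
  "W \<subseteq> H \<Longrightarrow> M.subspace W \<Longrightarrow> (\<And>x w. x \<in> b \<Longrightarrow> w \<in> W \<Longrightarrow> rho x w \<in> W) \<Longrightarrow> W = {0} \<or> W = H"
  using H_simple unfolding simple_lie_module_def by blast

lemmas H_zero = M.subspace_0[OF H_subspace]
  and H_add = M.subspace_add[OF H_subspace]
  and H_scale = M.subspace_scale[OF H_subspace]
  and H_neg = M.subspace_neg[OF H_subspace]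
  and H_diff = M.subspace_diff[OF H_subspace]
  and H_sum = M.subspace_sum[OF H_subspace]

lemma sigma_in_H: "h \<in> H \<Longrightarrow> sigma x h \<in> H"
  and sigma_add_left: "h \<in> H \<Longrightarrow> sigma (x + y) h = sigma x h + sigma y h"
  and sigma_scale_left: "h \<in> H \<Longrightarrow> sigma (sg c x) h = sm c (sigma x h)"
  and sigma_add_right: "h \<in> H \<Longrightarrow> h' \<in> H \<Longrightarrow> sigma x (h + h') = sigma x h + sigma x h'"
  and sigma_scale_right: "h \<in> H \<Longrightarrow> sigma x (sm c h) = sm c (sigma x h)"
  and sigma_bracket: "h \<in> H \<Longrightarrow> sigma (br x y) h = sigma x (sigma y h) - sigma y (sigma x h)"
  using sigma_module unfolding lie_module_def by blast+

lemma bracket_in_b: "y \<in> b \<Longrightarrow> br x y \<in> b"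
  using ideal_b unfolding lie_ideal_def by blast

lemma sd_proj: "sd_proj a b x \<in> a" "x - sd_proj a b x \<in> b"
proof -
  have a: "G.subspace a" using subalgebra_a unfolding lie_subalgebra_def by blast
  have b: "G.subspace b" using ideal_b unfolding lie_ideal_def by blast
  have "x \<in> {x + y | x y. x \<in> a \<and> y \<in> b}" using a_plus_b by simp
  then obtain y z where yz: "y \<in> a" "z \<in> b" "x = y + z" by blast
  have "\<exists>!y. y \<in> a \<and> x - y \<in> b"
  proof (rule ex1I[of _ y])
    show "y \<in> a \<and> x - y \<in> b" using yz by simp
    fix y' assume y': "y' \<in> a \<and> x - y' \<in> b"
    have "x - y \<in> b" using yz by simp
    then have "(x - y) - (x - y') \<in> b" using G.subspace_diff[OF b] y' by blast
    then have "y' - y \<in> b" by simp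
    moreover have "y' - y \<in> a" using G.subspace_diff[OF a] y' yz(1) by blast
    ultimately have "y' - y = 0" using a_inter_b by blast
    then show "y' = y" by simp
  qed
  then have "sd_proj a b x \<in> a \<and> x - sd_proj a b x \<in> b" unfolding sd_proj_def by (rule theI')
  then show "sd_proj a b x \<in> a" "x - sd_proj a b x \<in> b" by auto
qed

definition h0 :: 'm where "h0 = (SOME h. h \<in> H \<and> h \<noteq> 0)"

lemma h0_in_H: "h0 \<in> H" and h0_nonzero: "h0 \<noteq> 0"
proof -
  have "\<exists>h. h \<in> H \<and> h \<noteq> 0" using H_nontrivial H_zero by blast
  then have "h0 \<in> H \<and> h0 \<noteq> 0" unfolding h0_def by (rule someI_ex)
  then show "h0 \<in> H" "h0 \<noteq> 0" by auto
qed

lemma M_countable_span: "\<exists>B. countable B \<and> M.span B = UNIV"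
proof -
  obtain B where B: "countable B" "G.span B = UNIV"
    using countable_dim unfolding countable_dim_def by blast
  define orbit where "orbit = (\<lambda>xs. foldr rho xs h0) ` lists B"
  have "countable orbit" unfolding orbit_def using B(1) by auto
  have rho_orbit: "rho x v \<in> orbit" if x: "x \<in> B" and v: "v \<in> orbit" for x v
  proof -
    obtain xs where "xs \<in> lists B" "v = foldr rho xs h0" using v unfolding orbit_def by auto
    then show ?thesis using x unfolding orbit_def by (auto intro!: image_eqI[of _ _ "x # xs"])
  qed
  have rho_span_basis: "rho x w \<in> M.span orbit" if x: "x \<in> B" and w: "w \<in> M.span orbit" for x w
    using w
  proof (induction rule: M.span_induct_alt)
    case (step c v w)
    then show ?case using rho_orbit[OF x step(1)]
      by (simp add: rho_add_right rho_scale_right M.span_add M.span_scale M.span_base)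
  qed (simp add: M.span_zero)
  have rho_span: "rho x w \<in> M.span orbit" if w: "w \<in> M.span orbit" for x w
  proof -
    have "x \<in> G.span B" using B(2) by simp
    then show ?thesis
    proof (induction rule: G.span_induct_alt)
      case (step c y z)
      then show ?case using rho_span_basis[OF step(1) w]
        by (simp add: rho_add_left rho_scale_left M.span_add M.span_scale)
    qed (simp add: M.span_zero)
  qed
  have "h0 \<in> M.span orbit" unfolding orbit_def by (auto intro!: M.span_base image_eqI[of _ _ "[]"])
  moreover have "M.span orbit = {0} \<or> M.span orbit = UNIV"
    by (rule M_irreducible[OF M.subspace_span]) (rule rho_span)
  ultimately have "M.span orbit = UNIV" using h0_nonzero by auto
  then show ?thesis using \<open>countable orbit\<close> by blast
qed

definition b_hom :: "('m \<Rightarrow> 'm) \<Rightarrow> bool" where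
  "b_hom f \<longleftrightarrow> (\<forall>h\<in>H. \<forall>h'\<in>H. f (h + h') = f h + f h') \<and> (\<forall>c. \<forall>h\<in>H. f (sm c h) = sm c (f h))
     \<and> (\<forall>x\<in>b. \<forall>h\<in>H. f (rho x h) = rho x (f h))"

lemma b_homD:
  assumes "b_hom f"
  shows "h \<in> H \<Longrightarrow> h' \<in> H \<Longrightarrow> f (h + h') = f h + f h'"
    and "h \<in> H \<Longrightarrow> f (sm c h) = sm c (f h)"
    and "x \<in> b \<Longrightarrow> h \<in> H \<Longrightarrow> f (rho x h) = rho x (f h)"
  using assms unfolding b_hom_def by auto

lemma b_hom_zero: "b_hom f \<Longrightarrow> f 0 = 0"
  using b_homD(2)[of f 0 0] H_zero by simp

lemma b_hom_diff: "b_hom f \<Longrightarrow> h \<in> H \<Longrightarrow> h' \<in> H \<Longrightarrow> f (h - h') = f h - f h'"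
  using b_homD(1)[of f "h - h'" h'] H_diff by (simp add: eq_diff_eq)

lemma b_hom_lincomb: "b_hom f \<Longrightarrow> b_hom g \<Longrightarrow> b_hom (\<lambda>h. sm c (f h) + sm d (g h))"
  unfolding b_hom_def by
    (auto simp: M.scale_right_distrib rho_add_right rho_scale_right algebra_simps)

lemma b_hom_add: "b_hom f \<Longrightarrow> b_hom g \<Longrightarrow> b_hom (\<lambda>h. f h + g h)"
  using b_hom_lincomb[of f g 1 1] by simp

lemma b_hom_minus: "b_hom f \<Longrightarrow> b_hom g \<Longrightarrow> b_hom (\<lambda>h. f h - g h)"
  using b_hom_lincomb[of f g 1 "-1"] by (simp add: M.scale_minus_left)

lemma b_hom_scale: "b_hom f \<Longrightarrow> b_hom (\<lambda>h. sm c (f h))"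
  using b_hom_lincomb[of f f c 0] by simp

lemma b_hom_id: "b_hom (\<lambda>h. h)"
  unfolding b_hom_def by auto

lemma b_hom_vanishes:
  assumes "b_hom f" "h \<in> H" "h \<noteq> 0" "f h = 0" "h' \<in> H"
  shows "f h' = 0"
proof -
  have "{h\<in>H. f h = 0} = {0} \<or> {h\<in>H. f h = 0} = H"
  proof (rule H_irreducible)
    show "M.subspace {h\<in>H. f h = 0}"
      unfolding M.subspace_def
        using H_zero H_add H_scale b_hom_zero b_homD(1,2)[OF assms(1)] assms(1)
      by auto
  qed (use rho_in_H b_homD(3)[OF assms(1)] in auto)
  then show ?thesis using assms by auto
qed

lemma b_hom_unique: "b_hom f \<Longrightarrow> b_hom g \<Longrightarrow> f h0 = g h0 \<Longrightarrow> h \<in> H \<Longrightarrow> f h = g h"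
  using b_hom_vanishes[of "\<lambda>h. f h - g h" h0 h] b_hom_minus h0_in_H h0_nonzero by auto

lemma b_endomorphism_image:
  assumes g: "b_hom g" "\<And>h. h \<in> H \<Longrightarrow> g h \<in> H"
  shows "g ` H = {0} \<or> g ` H = H"
proof (rule H_irreducible)
  show "g ` H \<subseteq> H" using g(2) by auto
  show "M.subspace (g ` H)"
    unfolding M.subspace_def
  proof (intro conjI ballI allI)
    show "0 \<in> g ` H" using H_zero b_hom_zero[OF g(1)] by (metis image_eqI)
  next
    fix x y assume "x \<in> g ` H" "y \<in> g ` H"
    then obtain h h' where "h \<in> H" "h' \<in> H" "x = g h" "y = g h'" by blast
    then show "x + y \<in> g ` H" using b_homD(1)[OF g(1)] H_add by (metis image_eqI)
  next
    fix c x assume "x \<in> g ` H"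
    then obtain h where "h \<in> H" "x = g h" by blast
    then show "sm c x \<in> g ` H" using b_homD(2)[OF g(1)] H_scale by (metis image_eqI)
  qed
  show "rho x w \<in> g ` H" if x: "x \<in> b" and w: "w \<in> g ` H" for x w
  proof -
    obtain h where "h \<in> H" "w = g h" using w by blast
    then show ?thesis using b_homD(3)[OF g(1) x] rho_in_H[OF x] by (metis image_eqI)
  qed
qed

lemma b_endomorphism_zero_or_bij:
  assumes g: "b_hom g" "\<And>h. h \<in> H \<Longrightarrow> g h \<in> H"
  shows "bij_betw g H H \<or> (\<forall>h\<in>H. g h = 0)"
proof (rule disjCI)
  assume "\<not> (\<forall>h\<in>H. g h = 0)"
  then obtain h1 where h1: "h1 \<in> H" "g h1 \<noteq> 0" by blast
  have "inj_on g H"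
  proof (rule inj_onI)
    fix h h' assume "h \<in> H" "h' \<in> H" "g h = g h'"
    then have "g (h - h') = 0" using b_hom_diff[OF g(1)] by simp
    then show "h = h'"
      using b_hom_vanishes[OF g(1) H_diff[OF \<open>h \<in> H\<close> \<open>h' \<in> H\<close>] _ _ h1(1)] h1(2) by auto
  qed
  moreover have "g ` H = H" using b_endomorphism_image[OF g] h1 by auto
  ultimately show "bij_betw g H H" by (simp add: bij_betw_def)
qed

text \<open>Dixmier's lemma; the only place where the countable dimension of \<open>\<gg>\<close> is used.\<close>

lemma b_endomorphism_scalar:
  assumes f: "b_hom f" "\<And>h. h \<in> H \<Longrightarrow> f h \<in> H"
  shows "\<exists>c. \<forall>h\<in>H. f h = sm c h"
proof -
  interpret complex_endomorphism_on sm H f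
    using f H_subspace by unfold_locales (auto simp: b_hom_def)
  obtain B where "countable B" "M.span B = UNIV" using M_countable_span by blast
  then obtain z where z: "\<not> bij_betw (\<lambda>h. f h - sm z h) H H"
    using spectrum_nonempty[of B] H_nontrivial by auto
  have "b_hom (\<lambda>h. f h - sm z h)" using b_hom_minus[OF f(1) b_hom_scale[OF b_hom_id]] by simp
  moreover have "f h - sm z h \<in> H" if "h \<in> H" for h using that f(2) H_diff H_scale by auto
  ultimately have "\<forall>h\<in>H. f h - sm z h = 0" using b_endomorphism_zero_or_bij z by blast
  then show ?thesis by auto
qed

inductive_set b_ops :: "('m \<Rightarrow> 'm) set" where
  b_ops_id: "(\<lambda>v. v) \<in> b_ops"
| b_ops_rho: "f \<in> b_ops \<Longrightarrow> x \<in> b \<Longrightarrow> (\<lambda>v. rho x (f v)) \<in> b_ops"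
| b_ops_add: "f \<in> b_ops \<Longrightarrow> g \<in> b_ops \<Longrightarrow> (\<lambda>v. f v + g v) \<in> b_ops"
| b_ops_scale: "f \<in> b_ops \<Longrightarrow> (\<lambda>v. sm c (f v)) \<in> b_ops"

lemma b_ops_linear:
  assumes "f \<in> b_ops"
  shows b_ops_in_H: "h \<in> H \<Longrightarrow> f h \<in> H"
    and b_ops_add_right: "f (v + w) = f v + f w"
    and b_ops_scale_right: "f (sm c v) = sm c (f v)"
    and b_ops_commute: "b_hom p \<Longrightarrow> h \<in> H \<Longrightarrow> p (f h) = f (p h)"
  using assms
  by (induction arbitrary: h v w c rule: b_ops.induct)
    (auto simp: rho_add_right rho_scale_right rho_in_H H_add H_scale b_homD
      M.scale_right_distrib algebra_simps)

lemma b_ops_zero: "f \<in> b_ops \<Longrightarrow> f 0 = 0"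
  using b_ops_scale_right[of f 0 0] by simp

lemma b_ops_sum: "f \<in> b_ops \<Longrightarrow> f (sum g S) = (\<Sum>i\<in>S. f (g i))"
  by (induction S rule: infinite_finite_induct) (auto simp: b_ops_zero b_ops_add_right)

lemma b_ops_diff: "f \<in> b_ops \<Longrightarrow> g \<in> b_ops \<Longrightarrow> (\<lambda>v. f v - g v) \<in> b_ops"
  using b_ops_add[OF _ b_ops_scale[of g "-1"], of f] by (simp add: M.scale_minus_left)

lemma b_ops_orbit:
  assumes "h1 \<in> H" "h1 \<noteq> 0"
  shows "{f h1 | f. f \<in> b_ops} = H"
proof -
  let ?W = "{f h1 | f. f \<in> b_ops}"
  have "?W = {0} \<or> ?W = H"
  proof (rule H_irreducible)
    show "?W \<subseteq> H" using b_ops_in_H assms(1) by auto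
    show "M.subspace ?W"
      unfolding M.subspace_def
    proof (intro conjI ballI allI)
      have "(\<lambda>v. sm 0 v) \<in> b_ops" by (rule b_ops_scale[OF b_ops_id])
      then show "0 \<in> ?W" by force
    next
      fix x y assume "x \<in> ?W" "y \<in> ?W"
      then obtain f g where "f \<in> b_ops" "g \<in> b_ops" "x = f h1" "y = g h1" by blast
      then show "x + y \<in> ?W" using b_ops_add[of f g] by force
    next
      fix c x assume "x \<in> ?W"
      then obtain f where "f \<in> b_ops" "x = f h1" by blast
      then show "sm c x \<in> ?W" using b_ops_scale[of f c] by force
    qed
    show "rho x w \<in> ?W" if x: "x \<in> b" and w: "w \<in> ?W" for x w
    proof -
      obtain f where "f \<in> b_ops" "w = f h1" using w by blast
      then show ?thesis using b_ops_rho[of f x] x by force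
    qed
  qed
  moreover have "h1 \<in> ?W" using b_ops_id by force
  ultimately show ?thesis using assms by auto
qed

lemma b_ops_annihilator:
  assumes h1: "h1 \<in> H" "h1 \<noteq> 0" and k: "k \<in> H"
    and ann: "\<And>f. f \<in> b_ops \<Longrightarrow> f h1 = 0 \<Longrightarrow> f k = 0"
  shows "\<exists>c. k = sm c h1"
proof -
  \<comment> \<open>By \<open>ann\<close>, \<open>f h1 \<mapsto> f k\<close> is a well-defined \<open>\<bb>\<close>-endomorphism of \<open>H\<close>, hence a scalar.\<close>
  define psi where "psi y = (SOME z. \<exists>f\<in>b_ops. f h1 = y \<and> f k = z)" for y
  have psi: "psi (f h1) = f k" if f: "f \<in> b_ops" for f
  proof -
    have "\<exists>g\<in>b_ops. g h1 = f h1 \<and> g k = psi (f h1)"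
      unfolding psi_def by (rule someI_ex) (use f in blast)
    then obtain g where g: "g \<in> b_ops" "g h1 = f h1" "g k = psi (f h1)" by blast
    have "(\<lambda>v. g v - f v) k = 0" using ann[OF b_ops_diff[OF g(1) f]] g(2) by simp
    then show ?thesis using g(3) by simp
  qed
  have orbit: "\<exists>f\<in>b_ops. y = f h1" if "y \<in> H" for y
    using b_ops_orbit[OF h1] that by blast
  have "b_hom psi"
    unfolding b_hom_def
  proof (intro conjI ballI allI)
    fix y y' assume "y \<in> H" "y' \<in> H"
    then obtain f g where "f \<in> b_ops" "g \<in> b_ops" "y = f h1" "y' = g h1" using orbit by blast
    then show "psi (y + y') = psi y + psi y'" using psi b_ops_add[of f g] by simp
  next
    fix c y assume "y \<in> H"
    then obtain f where "f \<in> b_ops" "y = f h1" using orbit by blast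
    then show "psi (sm c y) = sm c (psi y)" using psi b_ops_scale[of f c] by simp
  next
    fix x y assume "x \<in> b" "y \<in> H"
    then obtain f where "f \<in> b_ops" "y = f h1" using orbit by blast
    then show "psi (rho x y) = rho x (psi y)" using psi b_ops_rho[of f x] \<open>x \<in> b\<close> by simp
  qed
  moreover have "psi y \<in> H" if "y \<in> H" for y
    using orbit[OF that] psi b_ops_in_H[OF _ k] by auto
  ultimately obtain c where "\<forall>y\<in>H. psi y = sm c y" using b_endomorphism_scalar by blast
  then have "psi h1 = sm c h1" using h1(1) by blast
  moreover have "psi h1 = k" using psi[OF b_ops_id] by simp
  ultimately show ?thesis by auto
qed

lemma b_ops_separate_or_multiples:
  assumes "h1 \<in> H" "h1 \<noteq> 0" "k ` S \<subseteq> H"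
  obtains (separate) f u where "f \<in> b_ops" "f h1 = 0" "u \<in> S" "f (k u) \<noteq> 0"
    | (multiples) c where "\<And>u. u \<in> S \<Longrightarrow> k u = sm (c u) h1"
proof (cases "\<exists>f\<in>b_ops. f h1 = 0 \<and> (\<exists>u\<in>S. f (k u) \<noteq> 0)")
  case False
  have "\<exists>c. k u = sm c h1" if "u \<in> S" for u
    using b_ops_annihilator[OF assms(1,2)] assms(3) False that by blast
  then have "\<exists>c. \<forall>u\<in>S. k u = sm (c u) h1" by (intro bchoice) blast
  then show ?thesis using that(2) by blast
qed (use that(1) in blast)

text \<open>\<open>U\<close> models \<open>Hom\<^sub>\<bb>(H, M)\<close>: a homomorphism is determined by its value at \<open>h0\<close>
  (\<open>b_hom_unique\<close>), and \<open>beta h u\<close> evaluates the homomorphism with value \<open>u\<close> at \<open>h\<close>.\<close>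

definition U :: "'m set" where "U = {f h0 | f. b_hom f}"

definition beta :: "'m \<Rightarrow> 'm \<Rightarrow> 'm" where
  "beta h u = (SOME f. b_hom f \<and> f h0 = u) h"

text \<open>The action \<open>(x \<cdot> \<phi>) h = x \<phi>(h) - \<phi>(\<sigma> x h)\<close> of \<open>\<aa>\<close> on \<open>Hom\<^sub>\<bb>(H, M)\<close>,
  evaluated at \<open>h0\<close>.\<close>

definition tau :: "'g \<Rightarrow> 'm \<Rightarrow> 'm" where
  "tau x u = rho x u - beta (sigma x h0) u"

lemma beta_b_hom: "u \<in> U \<Longrightarrow> b_hom (\<lambda>h. beta h u)"
  and beta_h0 [simp]: "u \<in> U \<Longrightarrow> beta h0 u = u"
proof -
  assume "u \<in> U"
  then have "\<exists>f. b_hom f \<and> f h0 = u" unfolding U_def by auto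
  then have "b_hom (SOME f. b_hom f \<and> f h0 = u) \<and> (SOME f. b_hom f \<and> f h0 = u) h0 = u"
    by (rule someI_ex)
  then show "b_hom (\<lambda>h. beta h u)" "beta h0 u = u" unfolding beta_def by auto
qed

lemma U_I: "b_hom f \<Longrightarrow> f h0 \<in> U"
  unfolding U_def by auto

lemma beta_eqI:
  assumes "b_hom f" "h \<in> H"
  shows "beta h (f h0) = f h"
  using b_hom_unique[OF beta_b_hom[OF U_I[OF assms(1)]] assms(1) beta_h0[OF U_I[OF assms(1)]]
      assms(2)] .

lemma h0_in_U: "h0 \<in> U"
  using U_I[OF b_hom_id] by simp

lemma U_subspace: "M.subspace U"
  unfolding M.subspace_def
proof (intro conjI ballI allI)
  show "0 \<in> U" using U_I[of "\<lambda>h. 0"] by (simp add: b_hom_def)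
  show "u + v \<in> U" if "u \<in> U" "v \<in> U" for u v
    using U_I[OF b_hom_add[OF beta_b_hom beta_b_hom]] that by simp
  show "sm c u \<in> U" if "u \<in> U" for c u
    using U_I[OF b_hom_scale[OF beta_b_hom]] that by simp
qed

lemmas U_zero = M.subspace_0[OF U_subspace]
  and U_add = M.subspace_add[OF U_subspace]
  and U_scale = M.subspace_scale[OF U_subspace]
  and U_sum = M.subspace_sum[OF U_subspace]

lemma beta_add_left: "u \<in> U \<Longrightarrow> h \<in> H \<Longrightarrow> h' \<in> H \<Longrightarrow> beta (h + h') u = beta h u + beta h' u"
  by (rule b_homD(1)[OF beta_b_hom])

lemma beta_scale_left: "u \<in> U \<Longrightarrow> h \<in> H \<Longrightarrow> beta (sm c h) u = sm c (beta h u)"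
  by (rule b_homD(2)[OF beta_b_hom])

lemma beta_rho: "u \<in> U \<Longrightarrow> x \<in> b \<Longrightarrow> h \<in> H \<Longrightarrow> beta (rho x h) u = rho x (beta h u)"
  by (rule b_homD(3)[OF beta_b_hom])

lemma beta_zero_left [simp]: "u \<in> U \<Longrightarrow> beta 0 u = 0"
  using b_hom_zero[OF beta_b_hom] .

lemma beta_minus_left: "u \<in> U \<Longrightarrow> h \<in> H \<Longrightarrow> beta (- h) u = - beta h u"
  using b_hom_diff[OF beta_b_hom, of u 0 h] H_zero by simp

lemma beta_diff_left: "u \<in> U \<Longrightarrow> h \<in> H \<Longrightarrow> h' \<in> H \<Longrightarrow> beta (h - h') u = beta h u - beta h' u"
  by (rule b_hom_diff[OF beta_b_hom])

lemma beta_add_right: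
  assumes "u \<in> U" "v \<in> U" "h \<in> H"
  shows "beta h (u + v) = beta h u + beta h v"
  using beta_eqI[OF b_hom_add[OF beta_b_hom[OF assms(1)] beta_b_hom[OF assms(2)]] assms(3)] assms
  by simp

lemma beta_scale_right:
  assumes "u \<in> U" "h \<in> H"
  shows "beta h (sm c u) = sm c (beta h u)"
  using beta_eqI[OF b_hom_scale[OF beta_b_hom[OF assms(1)]] assms(2)] assms by simp

lemma beta_zero_right [simp]: "h \<in> H \<Longrightarrow> beta h 0 = 0"
  using beta_scale_right[OF U_zero, of h 0] by simp

lemma beta_sum_right:
  "h \<in> H \<Longrightarrow> (\<And>i. i \<in> S \<Longrightarrow> g i \<in> U) \<Longrightarrow> beta h (sum g S) = (\<Sum>i\<in>S. beta h (g i))"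
proof (induction S rule: infinite_finite_induct)
  case (insert x F)
  then show ?case using beta_add_right[of "g x" "sum g F" h] U_sum[of F g] by auto
qed simp_all

lemma beta_bilinear: "W \<subseteq> U \<Longrightarrow> M.bilinear_on H W beta"
  unfolding M.bilinear_on_def
  by (auto simp: beta_add_left beta_scale_left beta_add_right beta_scale_right subset_iff)

lemma beta_eq_zero:
  assumes "u \<in> U" "h \<in> H" "h \<noteq> 0" "beta h u = 0"
  shows "u = 0"
  using b_hom_vanishes[OF beta_b_hom[OF assms(1)] assms(2-4) h0_in_H] assms(1) by simp

lemma twisted_b_hom:
  assumes u: "u \<in> U"
  shows "b_hom (\<lambda>h. rho x (beta h u) - beta (sigma x h) u)"
  unfolding b_hom_def
proof (intro conjI ballI allI)
  fix h h' assume "h \<in> H" "h' \<in> H"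
  then show "rho x (beta (h + h') u) - beta (sigma x (h + h')) u =
      (rho x (beta h u) - beta (sigma x h) u) + (rho x (beta h' u) - beta (sigma x h') u)"
    using u by (simp add: beta_add_left sigma_add_right sigma_in_H rho_add_right H_add)
next
  fix c h assume "h \<in> H"
  then show "rho x (beta (sm c h) u) - beta (sigma x (sm c h)) u =
      sm c (rho x (beta h u) - beta (sigma x h) u)"
    using u by (simp add: beta_scale_left sigma_scale_right sigma_in_H rho_scale_right H_scale
        M.scale_right_diff_distrib)
next
  fix y h assume y: "y \<in> b" and h: "h \<in> H"
  \<comment> \<open>Since \<open>\<sigma>\<close> extends the action of \<open>\<bb>\<close>, \<open>[\<sigma> x, \<rho> y] = \<rho> [x, y]\<close> on \<open>H\<close>.\<close>
  have xy: "br x y \<in> b" using bracket_in_b[OF y] .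
  have "sigma x (rho y h) = rho y (sigma x h) + rho (br x y) h"
    using sigma_bracket[OF h, of x y] sigma_eq_rho y h xy sigma_in_H[OF h] rho_in_H
    by (simp add: algebra_simps)
  then have "beta (sigma x (rho y h)) u = rho y (beta (sigma x h) u) + rho (br x y) (beta h u)"
    using u y h xy by (simp add: beta_add_left beta_rho sigma_in_H rho_in_H)
  moreover have "rho x (beta (rho y h) u) = rho y (rho x (beta h u)) + rho (br x y) (beta h u)"
    using beta_rho[OF u y h] rho_bracket[of x y "beta h u"] by (simp add: algebra_simps)
  ultimately show "rho x (beta (rho y h) u) - beta (sigma x (rho y h)) u =
      rho y (rho x (beta h u) - beta (sigma x h) u)"
    by (simp add: rho_diff_right)
qed

lemma tau_in_U: "u \<in> U \<Longrightarrow> tau x u \<in> U"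
  using U_I[OF twisted_b_hom[of u x]] unfolding tau_def by (simp add: h0_in_H)

lemma beta_tau:
  assumes "u \<in> U" "h \<in> H"
  shows "beta h (tau x u) = rho x (beta h u) - beta (sigma x h) u"
  using beta_eqI[OF twisted_b_hom[OF assms(1), of x] assms(2)] assms(1) unfolding tau_def
  by (simp add: h0_in_H)

lemma tau_bracket:
  assumes u: "u \<in> U"
  shows "tau (br x y) u = tau x (tau y u) - tau y (tau x u)"
proof -
  have sx: "sigma x h0 \<in> H" and sy: "sigma y h0 \<in> H" using sigma_in_H h0_in_H by auto
  have xy: "tau x (tau y u) = rho x (rho y u) - rho x (beta (sigma y h0) u)
      - (rho y (beta (sigma x h0) u) - beta (sigma y (sigma x h0)) u)"
    unfolding tau_def[of x "tau y u"] using beta_tau[OF u sx, of y] by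
      (simp add: tau_def rho_diff_right)
  have yx: "tau y (tau x u) = rho y (rho x u) - rho y (beta (sigma x h0) u)
      - (rho x (beta (sigma y h0) u) - beta (sigma x (sigma y h0)) u)"
    unfolding tau_def[of y "tau x u"] using beta_tau[OF u sy, of x] by
      (simp add: tau_def rho_diff_right)
  have bracket:
    "beta (sigma (br x y) h0) u = beta (sigma x (sigma y h0)) u - beta (sigma y (sigma x h0)) u"
    using sigma_bracket[OF h0_in_H, of x y] beta_diff_left[OF u sigma_in_H[OF sy] sigma_in_H[OF sx]]
      by simp
  show ?thesis unfolding tau_def[of "br x y"] rho_bracket xy yx bracket by (simp add: algebra_simps)
qed

lemma lie_module_tau: "lie_module sg br a sm U tau"
proof -
  have sx: "sigma x h0 \<in> H" for x using sigma_in_H h0_in_H by auto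
  have add_left: "tau (x + y) u = tau x u + tau y u" if "u \<in> U" for x y u
    using that unfolding tau_def
    by (simp add: rho_add_left sigma_add_left h0_in_H beta_add_left sx algebra_simps)
  have scale_left: "tau (sg c x) u = sm c (tau x u)" if "u \<in> U" for c x u
    using that unfolding tau_def
    by (simp add: rho_scale_left sigma_scale_left h0_in_H beta_scale_left sx
        M.scale_right_diff_distrib)
  have add_right: "tau x (u + v) = tau x u + tau x v" if "u \<in> U" "v \<in> U" for x u v
    using that unfolding tau_def by (simp add: rho_add_right beta_add_right sx algebra_simps)
  have scale_right: "tau x (sm c u) = sm c (tau x u)" if "u \<in> U" for x c u
    using that unfolding tau_def
    by (simp add: rho_scale_right beta_scale_right sx M.scale_right_diff_distrib)
  show ?thesis
    unfolding lie_module_def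
    by (intro conjI ballI allI)
      (simp_all add: U_subspace tau_in_U add_left scale_left add_right scale_right tau_bracket)
qed

lemma rho_beta:
  assumes "h \<in> H" "u \<in> U"
  shows "rho x (beta h u) = beta (sigma x h) u + beta h (tau (sd_proj a b x) u)"
proof -
  define y where "y = sd_proj a b x"
  define z where "z = x - y"
  have z: "z \<in> b" using sd_proj(2) unfolding z_def y_def .
  have "rho x (beta h u) = rho y (beta h u) + rho z (beta h u)"
    unfolding z_def by (simp flip: rho_add_left)
  also have "rho z (beta h u) = beta (sigma z h) u"
    using beta_rho[OF assms(2) z assms(1)] sigma_eq_rho z assms(1) by simp
  also have "rho y (beta h u) = beta h (tau y u) + beta (sigma y h) u"
    using beta_tau[OF assms(2,1)] by simp
  also have "beta (sigma y h) u + beta (sigma z h) u = beta (sigma x h) u"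
    using beta_add_left[OF assms(2) sigma_in_H[OF assms(1)] sigma_in_H[OF assms(1)]]
      sigma_add_left[OF assms(1), of y z] unfolding z_def by simp
  ultimately show ?thesis unfolding y_def by (simp add: algebra_simps)
qed

lemma beta_b_ops: "u \<in> U \<Longrightarrow> f \<in> b_ops \<Longrightarrow> h \<in> H \<Longrightarrow> beta (f h) u = f (beta h u)"
  by (rule b_ops_commute[OF _ beta_b_hom])

text \<open>A density argument: either an operator from \<open>b_ops\<close> kills \<open>k u1 \<noteq> 0\<close> but not the
  whole family, and the sum gets shorter, or all \<open>k u\<close> are multiples \<open>c u \<cdot> k u1\<close>,
  and the sum is \<open>beta (k u1) (\<Sum>u\<in>S. c u \<cdot> u)\<close>.\<close>

lemma beta_sum_eq_zero:
  assumes "finite S" "S \<subseteq> U" "M.independent S" "\<And>u. u \<in> S \<Longrightarrow> k u \<in> H"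
    and "(\<Sum>u\<in>S. beta (k u) u) = 0"
  shows "\<forall>u\<in>S. k u = 0"
  using assms
proof (induction "card S" arbitrary: S k rule: less_induct)
  case less
  note S = less.prems(1-3) and k = less.prems(4) and sum0 = less.prems(5)
  show ?case
  proof (rule ccontr)
    assume "\<not> (\<forall>u\<in>S. k u = 0)"
    then obtain u1 where u1: "u1 \<in> S" "k u1 \<noteq> 0" by blast
    have "k ` S \<subseteq> H" using k by blast
    then show False
    proof (rule b_ops_separate_or_multiples[OF k[OF u1(1)] u1(2)])
      fix f u2 assume separate: "f \<in> b_ops" "f (k u1) = 0" "u2 \<in> S" "f (k u2) \<noteq> 0"
      have "(\<Sum>u\<in>S. beta (f (k u)) u) = (\<Sum>u\<in>S. f (beta (k u) u))"
        using beta_b_ops[OF _ separate(1)] S(2) k by (intro sum.cong) auto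
      also have "\<dots> = f (\<Sum>u\<in>S. beta (k u) u)" by (rule b_ops_sum[OF separate(1), symmetric])
      also have "\<dots> = 0" using sum0 b_ops_zero[OF separate(1)] by simp
      finally have "(\<Sum>u\<in>S - {u1}. beta (f (k u)) u) = 0"
        using sum.remove[OF S(1) u1(1), of "\<lambda>u. beta (f (k u)) u"] separate(2) S(2) u1(1) by auto
      moreover have "card (S - {u1}) < card S" using S(1) u1(1) by (rule card_Diff1_less)
      ultimately have "\<forall>u\<in>S - {u1}. f (k u) = 0"
        using S k b_ops_in_H[OF separate(1)] M.independent_mono[OF S(3)]
        by (intro less.hyps) auto
      then show False using separate by (cases "u2 = u1") auto
    next
      fix c assume multiples: "\<And>u. u \<in> S \<Longrightarrow> k u = sm (c u) (k u1)"
      have "(\<Sum>u\<in>S. beta (k u) u) = (\<Sum>u\<in>S. beta (k u1) (sm (c u) u))"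
        using multiples k[OF u1(1)] S(2) by (intro sum.cong)
          (auto simp: beta_scale_left beta_scale_right)
      also have "\<dots> = beta (k u1) (\<Sum>u\<in>S. sm (c u) u)"
        by (rule beta_sum_right[symmetric]) (use k[OF u1(1)] S(2) U_scale in auto)
      finally have "beta (k u1) (\<Sum>u\<in>S. sm (c u) u) = 0" using sum0 by simp
      moreover have "(\<Sum>u\<in>S. sm (c u) u) \<in> U" using S(2) by (intro U_sum U_scale) auto
      ultimately have "(\<Sum>u\<in>S. sm (c u) u) = 0" using beta_eq_zero k[OF u1(1)] u1(2) by blast
      then have "c u1 = 0" using M.independentD[OF S(3) S(1) subset_refl _ u1(1)] by simp
      then show False using multiples[OF u1(1)] u1(2) by simp
    qed
  qed
qed

lemma beta_sum_in_span:
  assumes "u \<in> U" "finite E" "E \<subseteq> U" "M.independent E" "\<And>e. e \<in> E \<Longrightarrow> k e \<in> H"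
    and u: "u = (\<Sum>e\<in>E. beta (k e) e)"
  shows "u \<in> M.span E"
proof (rule ccontr)
  assume "u \<notin> M.span E"
  then have "u \<notin> E" "M.independent (insert u E)"
    using M.span_base M.independent_insertI[OF _ assms(4)] by auto
  define k' where "k' = k(u := - h0)"
  have "(\<Sum>e\<in>E. beta (k' e) e) = (\<Sum>e\<in>E. beta (k e) e)"
    using \<open>u \<notin> E\<close> unfolding k'_def by (intro sum.cong) auto
  then have "(\<Sum>e\<in>insert u E. beta (k' e) e) = beta (- h0) u + u"
    using \<open>u \<notin> E\<close> assms(2) u by (simp add: k'_def)
  also have "\<dots> = 0"
    using assms(1) h0_in_H by (simp add: beta_minus_left)
  finally have "\<forall>e\<in>insert u E. k' e = 0"
  proof (rule beta_sum_eq_zero[rotated 4])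
    show "finite (insert u E)" "insert u E \<subseteq> U" using assms(1-3) by auto
    show "M.independent (insert u E)" by fact
    show "k' e \<in> H" if "e \<in> insert u E" for e
      using that assms(5) H_neg[OF h0_in_H] unfolding k'_def by auto
  qed
  then have "- h0 = 0" unfolding k'_def by simp
  then show False using h0_nonzero by simp
qed

definition beta_span :: "'m set \<Rightarrow> 'm set" where
  "beta_span W = M.span {beta h w | h w. h \<in> H \<and> w \<in> W}"

lemma beta_span_invariant:
  assumes W: "W \<subseteq> U" "\<And>x w. x \<in> a \<Longrightarrow> w \<in> W \<Longrightarrow> tau x w \<in> W"
    and "m \<in> beta_span W"
  shows "rho x m \<in> beta_span W"
  using assms(3) unfolding beta_span_def
proof (induction rule: M.span_induct_alt)
  case (step c g m)
  then obtain h w where hw: "h \<in> H" "w \<in> W" "g = beta h w" by blast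
  have "rho x g = beta (sigma x h) w + beta h (tau (sd_proj a b x) w)"
    unfolding hw(3) using hw W(1) by (intro rho_beta) auto
  moreover have "beta (sigma x h) w \<in> {beta h w | h w. h \<in> H \<and> w \<in> W}"
    using hw sigma_in_H by blast
  moreover have "beta h (tau (sd_proj a b x) w) \<in> {beta h w | h w. h \<in> H \<and> w \<in> W}"
    using hw W(2) sd_proj(1) by blast
  ultimately have "rho x g \<in> M.span {beta h w | h w. h \<in> H \<and> w \<in> W}"
    by (simp add: M.span_add M.span_base)
  then show ?case using step(2) by (simp add: rho_add_right rho_scale_right M.span_add M.span_scale)
qed (simp add: M.span_zero)

lemma beta_span_eq_UNIV:
  assumes "W \<subseteq> U" "\<And>x w. x \<in> a \<Longrightarrow> w \<in> W \<Longrightarrow> tau x w \<in> W" "w \<in> W" "w \<noteq> 0"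
  shows "beta_span W = UNIV"
proof -
  have "beta h0 w \<in> {beta h w | h w. h \<in> H \<and> w \<in> W}" using h0_in_H assms(3) by blast
  then have "beta h0 w \<in> beta_span W" unfolding beta_span_def by (rule M.span_base)
  moreover have "beta h0 w = w" using assms(1,3) by auto
  moreover have "beta_span W = {0} \<or> beta_span W = UNIV"
  proof (rule M_irreducible)
    show "M.subspace (beta_span W)" unfolding beta_span_def by (rule M.subspace_span)
    show "rho x m \<in> beta_span W" if "m \<in> beta_span W" for x m
      using beta_span_invariant[OF assms(1,2) that] .
  qed
  ultimately show ?thesis using assms(4) by auto
qed

lemma beta_span_subset_eval: "beta_span W \<subseteq> eval_free sm beta ` free_space H W"
  unfolding beta_span_def
proof (rule M.span_minimal[OF _ M.eval_free_image_subspace])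
  show "{beta h w | h w. h \<in> H \<and> w \<in> W} \<subseteq> eval_free sm beta ` free_space H W"
  proof
    fix m assume "m \<in> {beta h w | h w. h \<in> H \<and> w \<in> W}"
    then obtain h w where "h \<in> H" "w \<in> W" "m = beta h w" by blast
    then have "m = eval_free sm beta (fdelta h w 1)" "fdelta h w 1 \<in> free_space H W"
      by (simp_all add: free_space_delta)
    then show "m \<in> eval_free sm beta ` free_space H W" by blast
  qed
qed

lemma beta_normal_form:
  assumes "W \<subseteq> U" "M.subspace W" "f \<in> free_space H W"
  obtains E k where "finite E" "E \<subseteq> W" "M.independent E" "\<And>e. e \<in> E \<Longrightarrow> k e \<in> H"
    "M.tensor_equiv H W f (\<lambda>q. \<Sum>e\<in>E. fdelta (k e) e 1 q)"
    "eval_free sm beta f = (\<Sum>e\<in>E. beta (k e) e)"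
proof -
  obtain E k where E: "finite E" "E \<subseteq> W" "M.independent E" "\<And>e. e \<in> E \<Longrightarrow> k e \<in> H"
    and equiv: "M.tensor_equiv H W f (\<lambda>q. \<Sum>e\<in>E. fdelta (k e) e 1 q)"
    using M.tensor_normal_form[OF H_subspace assms(2,3)] by blast
  have "eval_free sm beta f = eval_free sm beta (\<lambda>q. \<Sum>e\<in>E. fdelta (k e) e 1 q)"
  proof (rule M.tensor_equiv_eval[OF H_subspace assms(2) beta_bilinear[OF assms(1)] equiv])
    show "finite {p. f p \<noteq> 0}" using assms(3) unfolding free_space_def by blast
    show "finite {p. (\<Sum>e\<in>E. fdelta (k e) e 1 p) \<noteq> 0}"
      using E(1) by (intro finite_support_sum finite_support_delta)
  qed
  also have "\<dots> = (\<Sum>e\<in>E. beta (k e) e)" by (rule M.eval_free_normal_form[OF E(1)])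
  finally have eval: "eval_free sm beta f = (\<Sum>e\<in>E. beta (k e) e)" .
  show ?thesis by (rule that[OF E(1-3) _ equiv eval]) (rule E(4))
qed

lemma tensor_presentation_beta: "tensor_presentation sm sm sm H U UNIV beta"
  unfolding tensor_presentation_def
proof (intro conjI ballI)
  have "beta_span U = UNIV" using beta_span_eq_UNIV[OF subset_refl tau_in_U h0_in_U h0_nonzero] .
  then show "eval_free sm beta ` free_space H U = UNIV" using beta_span_subset_eval[of U] by blast
next
  fix f assume f: "f \<in> free_space H U"
  show "eval_free sm beta f = 0 \<longleftrightarrow> f \<in> tensor_relations sm sm H U"
  proof
    assume "eval_free sm beta f = 0"
    obtain E k where E: "finite E" "E \<subseteq> U" "M.independent E" "\<And>e. e \<in> E \<Longrightarrow> k e \<in> H"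
      and equiv: "M.tensor_equiv H U f (\<lambda>q. \<Sum>e\<in>E. fdelta (k e) e 1 q)"
      and eval: "eval_free sm beta f = (\<Sum>e\<in>E. beta (k e) e)"
      using beta_normal_form[OF subset_refl U_subspace f] by blast
    have "\<forall>e\<in>E. k e = 0"
      using beta_sum_eq_zero[OF E(1-4)] eval \<open>eval_free sm beta f = 0\<close> by simp
    then have "M.tensor_equiv H U (\<lambda>q. \<Sum>e\<in>E. fdelta (k e) e 1 q) (\<lambda>q. \<Sum>e\<in>E. 0)"
      using E(2) M.tensor_equiv_zero_left[OF H_subspace] by (intro M.tensor_equiv_sum[OF E(1)]) auto
    then have "(\<lambda>q. \<Sum>e\<in>E. fdelta (k e) e 1 q) \<in> tensor_relations sm sm H U"
      using M.tensor_equiv_relations[OF _ rel_zero] by simp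
    then show "f \<in> tensor_relations sm sm H U" using M.tensor_equiv_relations[OF equiv] by blast
  next
    assume "f \<in> tensor_relations sm sm H U"
    then show "eval_free sm beta f = 0"
      using M.tensor_relations_eval[OF _ H_subspace U_subspace beta_bilinear[OF subset_refl]]
        by blast
  qed
qed

lemma U_subset_invariant_subspace:
  assumes W: "W \<subseteq> U" "M.subspace W" "\<And>x w. x \<in> a \<Longrightarrow> w \<in> W \<Longrightarrow> tau x w \<in> W"
    and "w \<in> W" "w \<noteq> 0"
  shows "U \<subseteq> W"
proof
  fix u assume u: "u \<in> U"
  have "u \<in> beta_span W" using beta_span_eq_UNIV[OF W(1,3) \<open>w \<in> W\<close> \<open>w \<noteq> 0\<close>] by simp
  then have "u \<in> eval_free sm beta ` free_space H W" by (rule subsetD[OF beta_span_subset_eval])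
  then obtain f where f: "f \<in> free_space H W" "u = eval_free sm beta f" by blast
  obtain E k where E: "finite E" "E \<subseteq> W" "M.independent E" "\<And>e. e \<in> E \<Longrightarrow> k e \<in> H"
    and "eval_free sm beta f = (\<Sum>e\<in>E. beta (k e) e)"
    by (rule beta_normal_form[OF W(1,2) f(1)]) blast
  with f(2) have "u = (\<Sum>e\<in>E. beta (k e) e)" by simp
  moreover have "E \<subseteq> U" using E(2) W(1) by blast
  ultimately have "u \<in> M.span E"
    by (intro beta_sum_in_span[OF u E(1) _ E(3)]) (simp_all add: E(4))
  then show "u \<in> W" using M.span_minimal[OF E(2) W(2)] by blast
qed

lemma simple_lie_module_tau: "simple_lie_module sg br a sm U tau"
  unfolding simple_lie_module_def
proof (intro conjI allI impI)
  show "lie_module sg br a sm U tau" by (rule lie_module_tau)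
  show "U \<noteq> {0}" using h0_in_U h0_nonzero by blast
  fix W assume W: "W \<subseteq> U \<and> M.subspace W \<and> (\<forall>x\<in>a. \<forall>w\<in>W. tau x w \<in> W)"
  show "W = {0} \<or> W = U"
  proof (cases "W \<subseteq> {0}")
    case True
    then show ?thesis using M.subspace_0 W by blast
  next
    case False
    then obtain w where "w \<in> W" "w \<noteq> 0" by blast
    then have "U \<subseteq> W" using W by (intro U_subset_invariant_subspace) auto
    then show ?thesis using W by blast
  qed
qed

end

theorem theorem2p13:
  fixes sg :: "complex \<Rightarrow> 'g::ab_group_add \<Rightarrow> 'g"
    and br :: "'g \<Rightarrow> 'g \<Rightarrow> 'g"
    and a b :: "'g set"
    and sm :: "complex \<Rightarrow> 'm::ab_group_add \<Rightarrow> 'm"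
    and rho :: "'g \<Rightarrow> 'm \<Rightarrow> 'm"
    and H :: "'m set"
    and sigma :: "'g \<Rightarrow> 'm \<Rightarrow> 'm"
  assumes "lie_algebra sg br"
    and "countable_dim sg UNIV"
    and "lie_subalgebra sg br a"
    and "lie_ideal sg br b"
    and "a \<inter> b = {0}"
    and "{x + y | x y. x \<in> a \<and> y \<in> b} = UNIV"
    and "vector_space sm"
    and "simple_lie_module sg br UNIV sm UNIV rho"
    and "simple_lie_module sg br b sm H rho"
    and "lie_module sg br UNIV sm H sigma"
    and "\<forall>x\<in>b. \<forall>h\<in>H. sigma x h = rho x h"
  shows "\<exists>(U :: 'm set) (tau :: 'g \<Rightarrow> 'm \<Rightarrow> 'm) (beta :: 'm \<Rightarrow> 'm \<Rightarrow> 'm).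
           simple_lie_module sg br a sm U tau \<and>
           tensor_presentation sm sm sm H U UNIV beta \<and>
           (\<forall>x. \<forall>h\<in>H. \<forall>u\<in>U.
              rho x (beta h u) = beta (sigma x h) u + beta h (tau (sd_proj a b x) u))"
proof -
  interpret semidirect_module sg br a b sm rho H sigma
    using assms by (rule semidirect_module.intro)
  show ?thesis
    using simple_lie_module_tau tensor_presentation_beta rho_beta by blast
qed

end
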